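(* Let $N\ge 1$ and let $\mathcal{G}_N$ be the set of all real symmetric positive semi-definite $N\times N$ matrices $G$ with $G_{\mu\mu}=1$ for $\mu=1,\ldots,N$. Let $\mathsf{Aut}$ be the group of all affine bijections $\sigma:\mathcal{G}_N\to\mathcal{G}_N$, and let $\mathsf{Sym}$ be the subgroup of $\mathsf{Aut}$ generated by the maps $\Pi_\pi$ ($\pi\in S_N$) and $\mathsf{R}_{\mathcal T}$ ($\mathcal T\subseteq\{1,\ldots,N\}$) defined below. Then $\mathsf{Aut}=\mathsf{Sym}$.
   Context: For a permutation $\pi\in S_N$ let $U(\pi)$ be the $N\times N$ matrix with entries $U(\pi)_{\mu\nu}=\delta_{\mu,\pi(\nu)}$, and define $\Pi_\pi(G)=U(\pi)^{-1}GU(\pi)$, so that $\Pi_\pi(G)_{\mu\nu}=G_{\pi(\mu)\pi(\nu)}$. For a subset $\mathcal T\subseteq\{1,\ldots,N\}$ let $V_{\mathcal T}$ be the diagonal matrix with $(V_{\mathcal T})_{\mu\mu}=-1$ if $\mu\in\mathcal T$ and $+1$ otherwise, and define $\mathsf{R}_{\mathcal T}(G)=V_{\mathcal T}GV_{\mathcal T}$. Both kinds of maps are affine bijections of $\mathcal{G}_N$ onto itself. *)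

theory Defs
  imports "HOL-Analysis.Analysis" "HOL-Combinatorics.Permutations"
begin

text \<open>N x N real matrices, with N = CARD('n) (any N >= 1).\<close>

definition GN :: "(real^'n^'n) set" where
  "GN = {G. transpose G = G \<and> (\<forall>x. 0 \<le> x \<bullet> (G *v x)) \<and> (\<forall>\<mu>. G $ \<mu> $ \<mu> = 1)}"

definition Umat :: "('n \<Rightarrow> 'n) \<Rightarrow> real^'n^'n" where
  "Umat \<pi> = (\<chi> \<mu> \<nu>. if \<mu> = \<pi> \<nu> then 1 else 0)"

definition PiMap :: "('n \<Rightarrow> 'n) \<Rightarrow> real^'n^'n \<Rightarrow> real^'n^'n" where
  "PiMap \<pi> G = matrix_inv (Umat \<pi>) ** G ** Umat \<pi>"

definition Vmat :: "'n set \<Rightarrow> real^'n^'n" where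
  "Vmat T = (\<chi> \<mu> \<nu>. if \<mu> = \<nu> then (if \<mu> \<in> T then -1 else 1) else 0)"

definition RMap :: "'n set \<Rightarrow> real^'n^'n \<Rightarrow> real^'n^'n" where
  "RMap T G = Vmat T ** G ** Vmat T"

definition affine_on :: "'a::real_vector set \<Rightarrow> ('a \<Rightarrow> 'a) \<Rightarrow> bool" where
  "affine_on S f \<longleftrightarrow> (\<forall>x\<in>S. \<forall>y\<in>S. \<forall>t::real. 0 \<le> t \<and> t \<le> 1 \<longrightarrow>
      f ((1 - t) *\<^sub>R x + t *\<^sub>R y) = (1 - t) *\<^sub>R f x + t *\<^sub>R f y)"

text \<open>Maps of G_N are represented by functions that are the identity outside G_N.\<close>
definition extGN :: "(real^'n^'n \<Rightarrow> real^'n^'n) \<Rightarrow> real^'n^'n \<Rightarrow> real^'n^'n" where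
  "extGN f = (\<lambda>G. if G \<in> GN then f G else G)"

definition Aut :: "(real^'n^'n \<Rightarrow> real^'n^'n) set" where
  "Aut = {\<sigma>. bij_betw \<sigma> GN GN \<and> affine_on GN \<sigma> \<and> (\<forall>G. G \<notin> GN \<longrightarrow> \<sigma> G = G)}"

text \<open>Subgroup generated by the Pi_pi and R_T: all finite products of generators and
  their inverses (inverses taken as maps of G_N).\<close>
inductive_set Sym :: "(real^'n^'n \<Rightarrow> real^'n^'n) set" where
  Sym_id: "(\<lambda>G. G) \<in> Sym"
| Sym_Pi: "\<sigma> \<in> Sym \<Longrightarrow> \<pi> permutes UNIV \<Longrightarrow> extGN (PiMap \<pi>) \<circ> \<sigma> \<in> Sym"
| Sym_Pi_inv: "\<sigma> \<in> Sym \<Longrightarrow> \<pi> permutes UNIV \<Longrightarrow> extGN (inv_into GN (PiMap \<pi>)) \<circ> \<sigma> \<in> Sym"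
| Sym_R: "\<sigma> \<in> Sym \<Longrightarrow> extGN (RMap T) \<circ> \<sigma> \<in> Sym"
| Sym_R_inv: "\<sigma> \<in> Sym \<Longrightarrow> extGN (inv_into GN (RMap T)) \<circ> \<sigma> \<in> Sym"

end

theory Submission
  imports Defs
begin

text \<open>
  An affine bijection \<open>s\<close> of \<open>G\<^sub>N\<close> extends to an invertible linear map on the symmetric
  matrices with zero diagonal, so it preserves the vertices of \<open>G\<^sub>N\<close> (points with a
  full-dimensional normal cone) and the singular matrices (the relative boundary).
  The vertices are exactly the cut matrices \<open>x x\<^sup>T\<close>, \<open>x \<in> {\<plusminus>1}\<^sup>N\<close>, and \<open>s\<close>
  permutes them; since the identity is the barycentre of all cuts, \<open>s\<close> fixes it. The
  matrix \<open>I + E\<^sub>i\<^sub>j\<close> is the (singular) barycentre of the half of the cuts with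
  \<open>x\<^sub>i x\<^sub>j = 1\<close>, and a half of the cuts whose barycentre is singular lies in a coordinate
  hyperplane \<open>x\<^sub>a = \<plusminus>x\<^sub>b\<close>; hence the linear part of \<open>s\<close> maps each \<open>E\<^sub>i\<^sub>j\<close> to some
  \<open>\<plusminus>E\<^sub>a\<^sub>b\<close> and is an isometry. After composing with a sign change \<open>R\<^sub>T\<close> so that the
  all-ones cut is fixed, the isometry forces the cuts \<open>x\<close> with \<open>x \<bullet> 1 = N - 2\<close> to be
  permuted among themselves, which yields a permutation \<open>\<pi>\<close> with \<open>s = R\<^sub>T \<circ> \<Pi>\<^sub>\<pi>\<close>.
\<close>

definition qform :: "real^'n^'n \<Rightarrow> real^'n \<Rightarrow> real" where
  "qform G x = (\<Sum>u\<in>UNIV. \<Sum>w\<in>UNIV. x$u * G$u$w * x$w)"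

lemma qform_eq_inner: "qform G x = x \<bullet> (G *v x)"
  by (simp add: qform_def inner_vec_def matrix_vector_mult_def sum_distrib_left mult.assoc)

lemma GN_iff:
  "G \<in> GN \<longleftrightarrow> (\<forall>u w. G$u$w = G$w$u) \<and> (\<forall>x. 0 \<le> qform G x) \<and> (\<forall>u. G$u$u = 1)"
  unfolding GN_def by (auto simp: qform_eq_inner vec_eq_iff transpose_def)

lemma GN_sym: "G \<in> GN \<Longrightarrow> G$u$w = G$w$u"
  by (simp add: GN_iff)

lemma GN_diag: "G \<in> GN \<Longrightarrow> G$u$u = 1"
  by (simp add: GN_iff)

lemma GN_psd: "G \<in> GN \<Longrightarrow> 0 \<le> qform G y"
  by (simp add: GN_iff)

lemma GN_symmetric_inner:
  assumes "G \<in> GN"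
  shows "(G *v u) \<bullet> v = u \<bullet> (G *v v)"
proof -
  have "transpose G = G" using assms by (simp add: GN_def)
  then have "G *v u = u v* G" using vector_transpose_matrix[of u G] by simp
  then show ?thesis by (simp add: dot_lmul_matrix)
qed

lemma qform_add: "qform (A + B) x = qform A x + qform B x"
  by (simp add: qform_def algebra_simps sum.distrib)

lemma qform_diff: "qform (A - B) v = qform A v - qform B v"
  by (simp add: qform_def algebra_simps sum_subtractf)

lemma qform_scaleR: "qform (c *\<^sub>R M) v = c * qform M v"
  by (simp add: qform_def sum_distrib_left mult_ac)

lemma qform_scaleR_vec: "qform G (c *\<^sub>R v) = c * c * qform G v"
  by (simp add: qform_def sum_distrib_left mult_ac)

lemma qform_sum: "qform (\<Sum>x\<in>S. M x) v = (\<Sum>x\<in>S. qform (M x) v)"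
proof (induction S rule: infinite_finite_induct)
  case (infinite S) then show ?case by (simp add: qform_def)
next
  case empty then show ?case by (simp add: qform_def)
next
  case (insert x F) then show ?case by (simp add: qform_add)
qed

lemma qform_mat1: "qform (mat 1) v = v \<bullet> v"
  by (simp add: qform_eq_inner)

lemma qform_supp:
  assumes "\<And>u. u \<notin> S \<Longrightarrow> y$u = 0"
  shows "qform G y = (\<Sum>u\<in>S. \<Sum>w\<in>S. y$u * G$u$w * y$w)"
proof -
  have "(\<Sum>w\<in>UNIV. y$u * G$u$w * y$w) = (\<Sum>w\<in>S. y$u * G$u$w * y$w)" for u
    by (rule sum.mono_neutral_right) (auto simp: assms)
  then have "qform G y = (\<Sum>u\<in>UNIV. \<Sum>w\<in>S. y$u * G$u$w * y$w)"
    unfolding qform_def by simp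
  also have "\<dots> = (\<Sum>u\<in>S. \<Sum>w\<in>S. y$u * G$u$w * y$w)"
    by (rule sum.mono_neutral_right) (auto simp: assms)
  finally show ?thesis .
qed

lemma qform_two_supp:
  assumes ij: "i \<noteq> j" and y: "\<And>u. u \<noteq> i \<Longrightarrow> u \<noteq> j \<Longrightarrow> y$u = 0"
  shows "qform G y = y$i * G$i$i * y$i + y$i * G$i$j * y$j + y$j * G$j$i * y$i + y$j * G$j$j * y$j"
proof -
  have "qform G y = (\<Sum>u\<in>{i,j}. \<Sum>w\<in>{i,j}. y$u * G$u$w * y$w)"
    by (rule qform_supp) (use y in auto)
  also have "\<dots> = y$i * G$i$i * y$i + y$i * G$i$j * y$j + y$j * G$j$i * y$i + y$j * G$j$j * y$j"
    using ij by (simp add: sum.insert)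
  finally show ?thesis .
qed

lemma GN_entry_bound:
  assumes G: "G \<in> GN"
  shows "\<bar>G$i$j\<bar> \<le> 1"
proof (cases "i = j")
  case True then show ?thesis using GN_diag[OF G] by simp
next
  case False
  have q: "0 \<le> 2 + 2 * s * G$i$j" if "s * s = 1" for s
  proof -
    define y where "y = (\<chi> u. if u = i then 1 else if u = j then s else (0::real))"
    have yi: "y$i = 1" "y$j = s" using False by (auto simp: y_def)
    have "qform G y = 1 * G$i$i * 1 + 1 * G$i$j * s + s * G$j$i * 1 + s * G$j$j * s"
      using qform_two_supp[OF False, of y G] yi by (simp add: y_def)
    also have "\<dots> = 2 + 2 * s * G$i$j"
      using that GN_diag[OF G, of i] GN_diag[OF G, of j] GN_sym[OF G, of j i]
      by (simp add: algebra_simps)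
    finally show ?thesis using GN_psd[OF G, of y] by simp
  qed
  show ?thesis using q[of 1] q[of "-1"] by linarith
qed

lemma GN_convex:
  assumes x: "x \<in> GN" and y: "y \<in> GN" and t: "0 \<le> t" "t \<le> 1"
  shows "(1 - t) *\<^sub>R x + t *\<^sub>R y \<in> GN"
proof -
  have "qform ((1 - t) *\<^sub>R x + t *\<^sub>R y) v = (1 - t) * qform x v + t * qform y v" for v
    by (simp add: qform_add qform_scaleR)
  then show ?thesis using x y t unfolding GN_iff by auto
qed

lemma mat1_GN: "mat 1 \<in> GN"
  unfolding GN_iff qform_mat1 by (auto simp: mat_def)

definition perm_conj :: "('n \<Rightarrow> 'n) \<Rightarrow> real^'n^'n \<Rightarrow> real^'n^'n" where
  "perm_conj p G = (\<chi> u w. G $ p u $ p w)"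

definition sign_conj :: "('n \<Rightarrow> real) \<Rightarrow> real^'n^'n \<Rightarrow> real^'n^'n" where
  "sign_conj s G = (\<chi> u w. s u * G $ u $ w * s w)"

lemma Umat_mult: "Umat p ** Umat q = Umat (p \<circ> q)"
proof -
  have "(\<Sum>k\<in>UNIV. (if u = p k then 1 else 0) * (if k = q w then 1 else (0::real))) =
        (\<Sum>k\<in>UNIV. if k = q w then (if u = p k then 1 else 0) else 0)" for u w
    by (rule sum.cong) auto
  then show ?thesis by (simp add: Umat_def matrix_matrix_mult_def vec_eq_iff)
qed

lemma Umat_id: "Umat id = mat 1"
  by (simp add: Umat_def mat_def vec_eq_iff)

lemma matrix_inv_eqI:
  fixes A B :: "real^'n^'n"
  assumes "A ** B = mat 1" "B ** A = mat 1"
  shows "matrix_inv A = B"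
proof -
  define C where "C = matrix_inv A"
  have C: "A ** C = mat 1 \<and> C ** A = mat 1"
    unfolding C_def matrix_inv_def by (rule someI_ex) (use assms in blast)
  have "C = C ** (A ** B)" using assms by simp
  also have "\<dots> = (C ** A) ** B" by (simp add: matrix_mul_assoc)
  also have "\<dots> = B" using C by simp
  finally show ?thesis unfolding C_def .
qed

lemma PiMap_eq_perm_conj:
  assumes p: "p permutes UNIV"
  shows "PiMap p G = perm_conj p G"
proof -
  have "matrix_inv (Umat p) = Umat (inv p)"
    by (rule matrix_inv_eqI) (use p in \<open>simp_all add: Umat_mult permutes_inv_o Umat_id\<close>)
  moreover have "(\<Sum>k\<in>UNIV. (if u = inv p k then 1 else 0) * G$k$w) = G $ p u $ w" for u w
  proof -
    have "(\<Sum>k\<in>UNIV. (if u = inv p k then 1 else 0) * G$k$w) =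
          (\<Sum>k\<in>UNIV. if k = p u then G$k$w else 0)"
      by (rule sum.cong) (use p in \<open>auto simp: permutes_inverses\<close>)
    then show ?thesis by simp
  qed
  moreover have "(\<Sum>k\<in>UNIV. G $ p u $ k * (if k = p w then 1 else 0)) = G $ p u $ p w" for u w
  proof -
    have "(\<Sum>k\<in>UNIV. G $ p u $ k * (if k = p w then 1 else 0)) =
          (\<Sum>k\<in>UNIV. if k = p w then G $ p u $ k else 0)"
      by (rule sum.cong) auto
    then show ?thesis by simp
  qed
  ultimately show ?thesis
    by (simp add: PiMap_def Umat_def matrix_matrix_mult_def vec_eq_iff perm_conj_def)
qed

lemma RMap_eq_sign_conj: "RMap T G = sign_conj (\<lambda>u. if u \<in> T then -1 else 1) G"
proof -
  let ?s = "\<lambda>u. if u \<in> T then -1 else (1::real)"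
  have "(\<Sum>k\<in>UNIV. (if u = k then ?s u else 0) * G$k$w) = ?s u * G$u$w" for u w
  proof -
    have "(\<Sum>k\<in>UNIV. (if u = k then ?s u else 0) * G$k$w) =
          (\<Sum>k\<in>UNIV. if k = u then ?s u * G$k$w else 0)"
      by (rule sum.cong) auto
    then show ?thesis by simp
  qed
  then have left: "Vmat T ** G = (\<chi> u w. ?s u * G$u$w)"
    by (simp add: Vmat_def matrix_matrix_mult_def vec_eq_iff if_distrib cong: if_cong)
  have "(\<Sum>k\<in>UNIV. ?s u * G$u$k * (if k = w then ?s k else 0)) = ?s u * G$u$w * ?s w" for u w
  proof -
    have "(\<Sum>k\<in>UNIV. ?s u * G$u$k * (if k = w then ?s k else 0)) =
          (\<Sum>k\<in>UNIV. if k = w then ?s u * G$u$k * ?s k else 0)"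
      by (rule sum.cong) auto
    then show ?thesis by simp
  qed
  then show ?thesis
    unfolding RMap_def left by (simp add: Vmat_def matrix_matrix_mult_def vec_eq_iff sign_conj_def)
qed

lemma qform_perm_conj:
  assumes p: "p permutes UNIV"
  shows "qform (perm_conj p G) (\<chi> u. y $ p u) = qform G y"
proof -
  have "qform (perm_conj p G) (\<chi> u. y $ p u) =
        (\<Sum>u\<in>UNIV. \<Sum>w\<in>UNIV. y $ p u * G $ p u $ p w * y $ p w)"
    unfolding qform_def perm_conj_def by simp
  also have "\<dots> = (\<Sum>u\<in>UNIV. \<Sum>w\<in>UNIV. y $ p u * G $ p u $ w * y $ w)"
  proof (rule sum.cong[OF refl])
    fix u
    show "(\<Sum>w\<in>UNIV. y $ p u * G $ p u $ p w * y $ p w) = (\<Sum>w\<in>UNIV. y $ p u * G $ p u $ w * y $ w)"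
      using sum.permute[OF p, of "\<lambda>w. y $ p u * G $ p u $ w * y $ w"] by (simp add: o_def)
  qed
  also have "\<dots> = (\<Sum>u\<in>UNIV. \<Sum>w\<in>UNIV. y $ u * G $ u $ w * y $ w)"
    using sum.permute[OF p, of "\<lambda>u. \<Sum>w\<in>UNIV. y $ u * G $ u $ w * y $ w"] by (simp add: o_def)
  finally show ?thesis unfolding qform_def .
qed

lemma perm_conj_GN:
  assumes p: "p permutes UNIV" and G: "G \<in> GN"
  shows "perm_conj p G \<in> GN"
proof -
  have "0 \<le> qform (perm_conj p G) x" for x
  proof -
    have "x = (\<chi> u. (\<chi> v. x $ inv p v) $ p u)"
      using p by (simp add: vec_eq_iff permutes_inverses)
    then show ?thesis using qform_perm_conj[OF p] G by (metis GN_psd)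
  qed
  then show ?thesis using G unfolding GN_iff by (simp add: perm_conj_def)
qed

lemma sign_conj_GN:
  assumes s: "\<And>u. s u = 1 \<or> s u = -1" and G: "G \<in> GN"
  shows "sign_conj s G \<in> GN"
proof -
  have "qform (sign_conj s G) x = qform G (\<chi> v. s v * x $ v)" for x
    by (simp add: qform_def sign_conj_def mult_ac)
  moreover have "s u * s u = 1" for u using s[of u] by auto
  ultimately show ?thesis using G unfolding GN_iff by (simp add: sign_conj_def mult_ac)
qed

lemma perm_conj_comp: "perm_conj p (perm_conj q G) = perm_conj (q \<circ> p) G"
  by (simp add: perm_conj_def)

lemma perm_conj_id: "perm_conj id G = G"
  by (simp add: perm_conj_def vec_eq_iff)

lemma perm_conj_inv:
  assumes "p permutes UNIV"
  shows "perm_conj p (perm_conj (inv p) G) = G" "perm_conj (inv p) (perm_conj p G) = G"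
  using assms by (simp_all add: perm_conj_comp permutes_inv_o perm_conj_id)

lemma sign_conj_involution:
  assumes s: "\<And>u. s u = 1 \<or> s u = -1"
  shows "sign_conj s (sign_conj s G) = G"
proof -
  have "s u * s u = 1" for u using s[of u] by auto
  then show ?thesis by (simp add: sign_conj_def vec_eq_iff mult_ac)
qed

lemma affine_on_perm_conj: "affine_on S (perm_conj p)"
  unfolding affine_on_def by (simp add: perm_conj_def vec_eq_iff)

lemma affine_on_sign_conj: "affine_on S (sign_conj s)"
  unfolding affine_on_def by (simp add: sign_conj_def vec_eq_iff algebra_simps)

lemma Aut_affine: "s \<in> Aut \<Longrightarrow> affine_on GN s"
  unfolding Aut_def by auto

lemma Aut_inj_on: "s \<in> Aut \<Longrightarrow> inj_on s GN"
  unfolding Aut_def bij_betw_def by auto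

lemma Aut_GN: "s \<in> Aut \<Longrightarrow> G \<in> GN \<Longrightarrow> s G \<in> GN"
  unfolding Aut_def by (auto dest: bij_betwE)

lemma extGN_Aut:
  fixes f g :: "real^'n^'n \<Rightarrow> real^'n^'n"
  assumes f: "\<And>G. G \<in> GN \<Longrightarrow> f G \<in> GN" and g: "\<And>G. G \<in> GN \<Longrightarrow> g G \<in> GN"
    and gf: "\<And>G. G \<in> GN \<Longrightarrow> g (f G) = G" and fg: "\<And>G. G \<in> GN \<Longrightarrow> f (g G) = G"
    and aff: "affine_on GN f"
  shows "extGN f \<in> Aut"
proof -
  have "bij_betw f GN GN"
    by (rule bij_betw_byWitness[where f'=g]) (use f g gf fg in auto)
  then have "bij_betw (extGN f) GN GN"
    by (rule bij_betw_cong[THEN iffD1, rotated]) (simp add: extGN_def)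
  moreover have "affine_on GN (extGN f)"
    unfolding affine_on_def
  proof (intro ballI allI impI)
    fix x y :: "real^'n^'n" and t :: real
    assume xy: "x \<in> GN" "y \<in> GN" and t: "0 \<le> t \<and> t \<le> 1"
    then have "(1 - t) *\<^sub>R x + t *\<^sub>R y \<in> GN" using GN_convex by blast
    then show "extGN f ((1 - t) *\<^sub>R x + t *\<^sub>R y) = (1 - t) *\<^sub>R extGN f x + t *\<^sub>R extGN f y"
      using aff xy t unfolding affine_on_def extGN_def by simp
  qed
  ultimately show ?thesis unfolding Aut_def by (simp add: extGN_def)
qed

lemma Aut_comp:
  assumes a: "a \<in> Aut" and b: "b \<in> Aut"
  shows "a \<circ> b \<in> Aut"
proof -
  have "bij_betw (a \<circ> b) GN GN" using a b unfolding Aut_def by (auto intro: bij_betw_trans)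
  moreover have "affine_on GN (a \<circ> b)"
    using Aut_affine[OF a] Aut_affine[OF b] Aut_GN[OF b] unfolding affine_on_def by simp
  ultimately show ?thesis using a b unfolding Aut_def by auto
qed

lemma extGN_inv_into_eq:
  fixes f g :: "real^'n^'n \<Rightarrow> real^'n^'n"
  assumes g: "\<And>G. G \<in> GN \<Longrightarrow> g G \<in> GN"
    and gf: "\<And>G. G \<in> GN \<Longrightarrow> g (f G) = G" and fg: "\<And>G. G \<in> GN \<Longrightarrow> f (g G) = G"
  shows "extGN (inv_into GN f) = extGN g"
proof -
  have "inj_on f GN" by (metis gf inj_onI)
  then have "G \<in> GN \<Longrightarrow> inv_into GN f G = g G" for G
    using g fg by (rule inv_into_f_eq)
  then show ?thesis unfolding extGN_def by auto
qed

lemma PiMap_Aut: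
  assumes p: "p permutes UNIV"
  shows "extGN (PiMap p) \<in> Aut" "extGN (inv_into GN (PiMap p)) \<in> Aut"
proof -
  have pi: "inv p permutes UNIV" using p by (rule permutes_inv)
  have e: "PiMap p = perm_conj p"
    using PiMap_eq_perm_conj[OF p] by auto
  show "extGN (PiMap p) \<in> Aut" unfolding e
    by (rule extGN_Aut[where g="perm_conj (inv p)"])
      (simp_all add: p pi perm_conj_GN perm_conj_inv affine_on_perm_conj)
  have "extGN (inv_into GN (PiMap p)) = extGN (perm_conj (inv p))" unfolding e
    by (rule extGN_inv_into_eq) (simp_all add: p pi perm_conj_GN perm_conj_inv)
  moreover have "extGN (perm_conj (inv p)) \<in> Aut"
    by (rule extGN_Aut[where g="perm_conj p"])
      (simp_all add: p pi perm_conj_GN perm_conj_inv affine_on_perm_conj)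
  ultimately show "extGN (inv_into GN (PiMap p)) \<in> Aut" by simp
qed

lemma RMap_Aut: "extGN (RMap T) \<in> Aut" "extGN (inv_into GN (RMap T)) \<in> Aut"
proof -
  let ?s = "\<lambda>u. if u \<in> T then -1 else (1::real)"
  have s: "?s u = 1 \<or> ?s u = -1" for u by simp
  have e: "RMap T = sign_conj ?s" using RMap_eq_sign_conj by blast
  show R: "extGN (RMap T) \<in> Aut" unfolding e
    by (rule extGN_Aut[where g="sign_conj ?s"])
      (simp_all add: sign_conj_GN[OF s] sign_conj_involution[OF s] affine_on_sign_conj)
  have "extGN (inv_into GN (RMap T)) = extGN (RMap T)" unfolding e
    by (rule extGN_inv_into_eq) (simp_all add: sign_conj_GN[OF s] sign_conj_involution[OF s])
  then show "extGN (inv_into GN (RMap T)) \<in> Aut" using R by simp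
qed

lemma id_Aut: "(\<lambda>G. G) \<in> Aut"
  unfolding Aut_def affine_on_def by (simp add: bij_betw_id[unfolded id_def])

lemma Sym_subset_Aut: "Sym \<subseteq> Aut"
proof
  fix s assume "s \<in> Sym"
  then show "s \<in> Aut"
    by induct (auto intro: id_Aut Aut_comp[unfolded comp_def] PiMap_Aut RMap_Aut)
qed

section \<open>The linear part of an affine map of \<open>G\<^sub>N\<close>\<close>

text \<open>The affine hull of \<open>G\<^sub>N\<close> is \<open>I\<close> plus the space of hollow matrices
  (symmetric, zero diagonal); \<open>safe_step H\<close> is a step size \<open>t\<close> for which
  \<open>I + t H\<close> stays in \<open>G\<^sub>N\<close>.\<close>

definition hollow :: "real^'n^'n \<Rightarrow> bool" where
  "hollow X \<longleftrightarrow> (\<forall>i j. X$i$j = X$j$i) \<and> (\<forall>i. X$i$i = 0)"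

definition hollow_part :: "real^'n^'n \<Rightarrow> real^'n^'n" where
  "hollow_part X = (\<chi> i j. if i = j then 0 else (X$i$j + X$j$i) / 2)"

definition abs_sum :: "real^'n^'n \<Rightarrow> real" where
  "abs_sum X = (\<Sum>i\<in>UNIV. \<Sum>j\<in>UNIV. \<bar>X$i$j\<bar>)"

definition safe_step :: "real^'n^'n \<Rightarrow> real" where
  "safe_step X = 1 / (real CARD('n) * (1 + abs_sum X))"

lemma abs_sum_ge_entry: "\<bar>X$i$j\<bar> \<le> abs_sum X"
proof -
  have "\<bar>X$i$j\<bar> \<le> (\<Sum>j\<in>UNIV. \<bar>X$i$j\<bar>)" by (rule member_le_sum) auto
  also have "\<dots> \<le> abs_sum X" unfolding abs_sum_def
    by (rule member_le_sum[of i UNIV "\<lambda>i. \<Sum>j\<in>UNIV. \<bar>X$i$j\<bar>"]) (auto intro: sum_nonneg)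
  finally show ?thesis .
qed

lemma abs_sum_nonneg: "0 \<le> abs_sum X"
  unfolding abs_sum_def by (auto intro: sum_nonneg)

lemma abs_sum_uminus: "abs_sum (- X) = abs_sum X"
  by (simp add: abs_sum_def)

lemma abs_sum_hollow_part: "abs_sum (hollow_part X) \<le> abs_sum X"
proof -
  have "\<bar>hollow_part X$i$j\<bar> \<le> (\<bar>X$i$j\<bar> + \<bar>X$j$i\<bar>) / 2" for i j
    by (auto simp: hollow_part_def)
  then have "abs_sum (hollow_part X) \<le> (\<Sum>i\<in>UNIV. \<Sum>j\<in>UNIV. (\<bar>X$i$j\<bar> + \<bar>X$j$i\<bar>) / 2)"
    unfolding abs_sum_def by (intro sum_mono) auto
  also have "\<dots> = abs_sum X" unfolding abs_sum_def
    by (simp add: sum.distrib add_divide_distrib sum_divide_distrib[symmetric])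
       (simp add: sum.swap[of "\<lambda>i j. \<bar>X$j$i\<bar>"])
  finally show ?thesis .
qed

lemma safe_step_pos: "safe_step X > 0"
  unfolding safe_step_def using abs_sum_nonneg[of X] by (simp add: field_simps add_pos_nonneg)

lemma safe_step_uminus: "safe_step (- X) = safe_step X"
  by (simp add: safe_step_def abs_sum_uminus)

lemma safe_step_hollow_part: "safe_step X \<le> safe_step (hollow_part X)"
  unfolding safe_step_def using abs_sum_hollow_part[of X] abs_sum_nonneg[of "hollow_part X"]
  by (intro divide_left_mono mult_left_mono mult_pos_pos) auto

lemma hollow_hollow_part: "hollow (hollow_part X)"
  by (simp add: hollow_def hollow_part_def)

lemma hollow_part_hollow: "hollow X \<Longrightarrow> hollow_part X = X"
  by (simp add: hollow_def hollow_part_def vec_eq_iff)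

lemma hollow_part_add: "hollow_part (X + Y) = hollow_part X + hollow_part Y"
  by (simp add: hollow_part_def vec_eq_iff add_divide_distrib)

lemma hollow_part_scaleR: "hollow_part (c *\<^sub>R X) = c *\<^sub>R hollow_part X"
  by (simp add: hollow_part_def vec_eq_iff algebra_simps)

lemma hollow_add: "hollow X \<Longrightarrow> hollow Y \<Longrightarrow> hollow (X + Y)"
  by (simp add: hollow_def)

lemma hollow_diff: "hollow X \<Longrightarrow> hollow Y \<Longrightarrow> hollow (X - Y)"
  by (simp add: hollow_def)

lemma hollow_scaleR: "hollow X \<Longrightarrow> hollow (c *\<^sub>R X)"
  by (simp add: hollow_def)

lemma hollow_uminus: "hollow X \<Longrightarrow> hollow (- X)"
  by (simp add: hollow_def)

lemma GN_minus_mat1_hollow: "G \<in> GN \<Longrightarrow> hollow (G - mat 1)"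
  by (simp add: hollow_def GN_iff mat_def)

lemma mat1_plus_small_GN:
  fixes H :: "real^'n^'n"
  assumes H: "hollow H" and small: "\<And>i j. \<bar>H$i$j\<bar> \<le> 1 / real CARD('n)"
  shows "mat 1 + H \<in> GN"
proof -
  let ?N = "real CARD('n)"
  have "0 \<le> qform (mat 1 + H) x" for x
  proof -
    have bound: "\<bar>x$u * H$u$w * x$w\<bar> \<le> (1 / ?N) * ((x$u * x$u + x$w * x$w) / 2)" for u w
    proof -
      have "\<bar>x$u * H$u$w * x$w\<bar> = \<bar>H$u$w\<bar> * (\<bar>x$u\<bar> * \<bar>x$w\<bar>)" by (simp add: abs_mult)
      also have "\<dots> \<le> (1 / ?N) * (\<bar>x$u\<bar> * \<bar>x$w\<bar>)"
        by (rule mult_right_mono[OF small]) simp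
      also have "\<dots> \<le> (1 / ?N) * ((x$u * x$u + x$w * x$w) / 2)"
      proof (rule mult_left_mono)
        have "0 \<le> (\<bar>x$u\<bar> - \<bar>x$w\<bar>)^2" by simp
        then show "\<bar>x$u\<bar> * \<bar>x$w\<bar> \<le> (x$u * x$u + x$w * x$w) / 2"
          by (simp add: power2_eq_square algebra_simps abs_mult_self_eq)
      qed simp
      finally show ?thesis .
    qed
    have "\<bar>qform H x\<bar> \<le> (\<Sum>u\<in>UNIV. \<Sum>w\<in>UNIV. \<bar>x$u * H$u$w * x$w\<bar>)"
      unfolding qform_def by (rule order_trans[OF sum_abs]) (intro sum_mono sum_abs)
    also have "\<dots> \<le> (\<Sum>u\<in>UNIV. \<Sum>w\<in>UNIV. (1 / ?N) * ((x$u * x$u + x$w * x$w) / 2))"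
      by (intro sum_mono bound)
    also have "\<dots> = (1 / ?N) * (\<Sum>u\<in>UNIV. \<Sum>w\<in>UNIV. (x$u * x$u + x$w * x$w) / 2)"
      by (simp add: sum_distrib_left)
    also have "(\<Sum>u\<in>UNIV. \<Sum>w\<in>UNIV. (x$u * x$u + x$w * x$w) / 2) = ?N * (x \<bullet> x)"
      by (simp add: inner_vec_def sum.distrib add_divide_distrib sum_divide_distrib[symmetric]
          sum_distrib_left[symmetric])
    finally have "\<bar>qform H x\<bar> \<le> x \<bullet> x" by simp
    then show ?thesis unfolding qform_add qform_mat1 by linarith
  qed
  then show ?thesis using H unfolding GN_iff by (simp add: hollow_def mat_def)
qed

lemma mat1_plus_scaled_GN:
  fixes H :: "real^'n^'n"
  assumes H: "hollow H" and s: "0 \<le> s" "s \<le> safe_step H"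
  shows "mat 1 + s *\<^sub>R H \<in> GN"
proof (rule mat1_plus_small_GN)
  show "hollow (s *\<^sub>R H)" using H by (rule hollow_scaleR)
  fix i j
  have pos: "0 < real CARD('n) + abs_sum H * real CARD('n)"
    using abs_sum_nonneg[of H] by (simp add: add_pos_nonneg)
  have "\<bar>(s *\<^sub>R H)$i$j\<bar> = s * \<bar>H$i$j\<bar>" using s by (simp add: abs_mult)
  also have "\<dots> \<le> safe_step H * (1 + abs_sum H)"
    using s abs_sum_ge_entry[of H i j] abs_sum_nonneg[of H] by (intro mult_mono) auto
  also have "\<dots> = 1 / real CARD('n)"
    using pos by (simp add: field_simps safe_step_def)
  finally show "\<bar>(s *\<^sub>R H)$i$j\<bar> \<le> 1 / real CARD('n)" .
qed

text \<open>The increment \<open>incr f H\<close> of an affine \<open>f\<close> is homogeneous along every segment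
  from \<open>I\<close> inside \<open>G\<^sub>N\<close>, so \<open>lin_part f\<close> below does not depend on the step size
  (\<open>lin_part_eq\<close>); projecting to the hollow part makes it total.\<close>

definition incr :: "(real^'n^'n \<Rightarrow> real^'n^'n) \<Rightarrow> real^'n^'n \<Rightarrow> real^'n^'n" where
  "incr f H = f (mat 1 + H) - f (mat 1)"

definition lin_part :: "(real^'n^'n \<Rightarrow> real^'n^'n) \<Rightarrow> real^'n^'n \<Rightarrow> real^'n^'n" where
  "lin_part f X = (1 / safe_step X) *\<^sub>R incr f (safe_step X *\<^sub>R hollow_part X)"

lemma incr_scaleR:
  fixes f :: "real^'n^'n \<Rightarrow> real^'n^'n"
  assumes aff: "affine_on GN f" and H: "mat 1 + H \<in> GN" and s: "0 \<le> s" "s \<le> 1"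
  shows "incr f (s *\<^sub>R H) = s *\<^sub>R incr f H"
proof -
  have e: "(1 - s) *\<^sub>R mat 1 + s *\<^sub>R (mat 1 + H) = mat 1 + s *\<^sub>R H"
    by (simp add: algebra_simps)
  have "f (mat 1 + s *\<^sub>R H) = (1 - s) *\<^sub>R f (mat 1) + s *\<^sub>R f (mat 1 + H)"
    using aff mat1_GN H s unfolding affine_on_def e[symmetric] by blast
  then show ?thesis unfolding incr_def by (simp add: algebra_simps)
qed

lemma incr_midpoint:
  fixes f :: "real^'n^'n \<Rightarrow> real^'n^'n"
  assumes aff: "affine_on GN f" and H: "mat 1 + H \<in> GN" "mat 1 + K \<in> GN"
  shows "incr f ((1/2) *\<^sub>R (H + K)) = (1/2) *\<^sub>R (incr f H + incr f K)"
proof -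
  have e: "(1 - 1/2) *\<^sub>R (mat 1 + H) + (1/2) *\<^sub>R (mat 1 + K) = mat 1 + (1/2) *\<^sub>R (H + K)"
    by (simp add: vec_eq_iff field_simps)
  have "f ((1 - 1/2) *\<^sub>R (mat 1 + H) + (1/2) *\<^sub>R (mat 1 + K)) =
        (1 - 1/2) *\<^sub>R f (mat 1 + H) + (1/2) *\<^sub>R f (mat 1 + K)"
    by (rule aff[unfolded affine_on_def, rule_format]) (use H in auto)
  then show ?thesis unfolding incr_def e by (simp add: algebra_simps)
qed

lemma lin_part_eq:
  fixes f :: "real^'n^'n \<Rightarrow> real^'n^'n"
  assumes aff: "affine_on GN f" and H: "hollow H" and t: "0 < t" and G: "mat 1 + t *\<^sub>R H \<in> GN"
  shows "lin_part f H = (1 / t) *\<^sub>R incr f (t *\<^sub>R H)"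
proof -
  let ?l = "safe_step H"
  have l: "?l > 0" by (rule safe_step_pos)
  have lG: "mat 1 + ?l *\<^sub>R H \<in> GN" using mat1_plus_scaled_GN[OF H] l by simp
  define m where "m = min t ?l"
  have m: "m > 0" using t l by (simp add: m_def)
  have "incr f (m *\<^sub>R H) = incr f ((m / t) *\<^sub>R (t *\<^sub>R H))" using t by simp
  also have "\<dots> = (m / t) *\<^sub>R incr f (t *\<^sub>R H)"
    by (rule incr_scaleR[OF aff G]) (use m t in \<open>auto simp: m_def\<close>)
  finally have 1: "incr f (m *\<^sub>R H) = (m / t) *\<^sub>R incr f (t *\<^sub>R H)" .
  have "incr f (m *\<^sub>R H) = incr f ((m / ?l) *\<^sub>R (?l *\<^sub>R H))" using l by simp
  also have "\<dots> = (m / ?l) *\<^sub>R incr f (?l *\<^sub>R H)"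
    by (rule incr_scaleR[OF aff lG]) (use m l in \<open>auto simp: m_def\<close>)
  finally have 2: "incr f (m *\<^sub>R H) = (m / ?l) *\<^sub>R incr f (?l *\<^sub>R H)" .
  have "lin_part f H = (1 / ?l) *\<^sub>R incr f (?l *\<^sub>R H)"
    unfolding lin_part_def hollow_part_hollow[OF H] ..
  also have "\<dots> = (1 / m) *\<^sub>R incr f (m *\<^sub>R H)" using 2 m l by simp
  also have "\<dots> = (1 / t) *\<^sub>R incr f (t *\<^sub>R H)" using 1 m t by simp
  finally show ?thesis .
qed

lemma lin_part_hollow_part:
  fixes f :: "real^'n^'n \<Rightarrow> real^'n^'n"
  assumes aff: "affine_on GN f"
  shows "lin_part f X = lin_part f (hollow_part X)"
proof -
  have "mat 1 + safe_step X *\<^sub>R hollow_part X \<in> GN"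
    using safe_step_pos[of X] safe_step_hollow_part[of X]
    by (intro mat1_plus_scaled_GN hollow_hollow_part) auto
  from lin_part_eq[OF aff hollow_hollow_part safe_step_pos this] show ?thesis
    unfolding lin_part_def by simp
qed

lemma lin_part_add_hollow:
  fixes f :: "real^'n^'n \<Rightarrow> real^'n^'n"
  assumes aff: "affine_on GN f" and H: "hollow H" "hollow K"
  shows "lin_part f (H + K) = lin_part f H + lin_part f K"
proof -
  define t where "t = min (safe_step H) (safe_step K) / 2"
  have t: "t > 0" using safe_step_pos[of H] safe_step_pos[of K] by (simp add: t_def)
  have G: "mat 1 + (2 * t) *\<^sub>R H \<in> GN" "mat 1 + (2 * t) *\<^sub>R K \<in> GN"
    using mat1_plus_scaled_GN[OF H(1), of "2 * t"] mat1_plus_scaled_GN[OF H(2), of "2 * t"] t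
    by (simp_all add: t_def)
  have e: "t *\<^sub>R (H + K) = (1/2) *\<^sub>R ((2 * t) *\<^sub>R H + (2 * t) *\<^sub>R K)"
    by (simp add: algebra_simps)
  have "(1 - 1/2) *\<^sub>R (mat 1 + (2 * t) *\<^sub>R H) + (1/2) *\<^sub>R (mat 1 + (2 * t) *\<^sub>R K) =
        mat 1 + t *\<^sub>R (H + K)"
    by (simp add: vec_eq_iff field_simps)
  then have "mat 1 + t *\<^sub>R (H + K) \<in> GN"
    using GN_convex[OF G, of "1/2"] by simp
  then have "lin_part f (H + K) = (1 / t) *\<^sub>R incr f (t *\<^sub>R (H + K))"
    by (rule lin_part_eq[OF aff hollow_add[OF H] t])
  also have "\<dots> = (1 / (2 * t)) *\<^sub>R incr f ((2 * t) *\<^sub>R H) + (1 / (2 * t)) *\<^sub>R incr f ((2 * t) *\<^sub>R K)"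
    unfolding e incr_midpoint[OF aff G] by (simp add: algebra_simps)
  also have "\<dots> = lin_part f H + lin_part f K"
    using lin_part_eq[OF aff H(1) _ G(1)] lin_part_eq[OF aff H(2) _ G(2)] t by simp
  finally show ?thesis .
qed

lemma lin_part_uminus_hollow:
  fixes f :: "real^'n^'n \<Rightarrow> real^'n^'n"
  assumes aff: "affine_on GN f" and H: "hollow H"
  shows "lin_part f (- H) = - lin_part f H"
proof -
  let ?t = "safe_step H"
  have t: "?t > 0" by (rule safe_step_pos)
  have G: "mat 1 + ?t *\<^sub>R H \<in> GN" "mat 1 + ?t *\<^sub>R (- H) \<in> GN"
    using mat1_plus_scaled_GN[OF H, of ?t] mat1_plus_scaled_GN[OF hollow_uminus[OF H], of ?t] t
    by (simp_all add: safe_step_uminus)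
  have "(1/2) *\<^sub>R (incr f (?t *\<^sub>R H) + incr f (?t *\<^sub>R (- H))) = 0"
    using incr_midpoint[OF aff G] by (simp add: incr_def)
  then have "incr f (?t *\<^sub>R H) + incr f (?t *\<^sub>R (- H)) = 0"
    by simp
  then have "incr f (?t *\<^sub>R (- H)) = - incr f (?t *\<^sub>R H)"
    by (simp add: eq_neg_iff_add_eq_0 add.commute)
  then show ?thesis
    using lin_part_eq[OF aff H t G(1)] lin_part_eq[OF aff hollow_uminus[OF H] t G(2)] by simp
qed

lemma lin_part_scaleR_hollow:
  fixes f :: "real^'n^'n \<Rightarrow> real^'n^'n"
  assumes aff: "affine_on GN f" and H: "hollow H"
  shows "lin_part f (c *\<^sub>R H) = c *\<^sub>R lin_part f H"
proof -
  have pos: "lin_part f (c *\<^sub>R H) = c *\<^sub>R lin_part f H"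
    if c: "c > 0" and H: "hollow H" for c and H :: "real^'n^'n"
  proof -
    let ?l = "safe_step H"
    have l: "?l > 0" by (rule safe_step_pos)
    have G: "mat 1 + (?l / c) *\<^sub>R (c *\<^sub>R H) \<in> GN"
      using mat1_plus_scaled_GN[OF H, of ?l] l c by simp
    have "lin_part f (c *\<^sub>R H) = (1 / (?l / c)) *\<^sub>R incr f ((?l / c) *\<^sub>R (c *\<^sub>R H))"
      by (rule lin_part_eq[OF aff hollow_scaleR[OF H] _ G]) (use l c in simp)
    also have "\<dots> = c *\<^sub>R ((1 / ?l) *\<^sub>R incr f (?l *\<^sub>R H))" using c by simp
    also have "(1 / ?l) *\<^sub>R incr f (?l *\<^sub>R H) = lin_part f H"
      unfolding lin_part_def hollow_part_hollow[OF H] ..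
    finally show ?thesis .
  qed
  consider "c > 0" | "c = 0" | "c < 0" by linarith
  then show ?thesis
  proof cases
    case 1 then show ?thesis using pos H by blast
  next
    case 2
    have "hollow_part 0 = (0::real^'n^'n)" by (simp add: hollow_part_def vec_eq_iff)
    then show ?thesis using 2 by (simp add: lin_part_def incr_def)
  next
    case 3
    have "lin_part f (c *\<^sub>R H) = (- c) *\<^sub>R lin_part f (- H)"
      using pos[OF _ hollow_uminus[OF H], of "- c"] 3 by simp
    then show ?thesis using lin_part_uminus_hollow[OF aff H] by simp
  qed
qed

lemma linear_lin_part:
  fixes f :: "real^'n^'n \<Rightarrow> real^'n^'n"
  assumes aff: "affine_on GN f"
  shows "linear (lin_part f)"
proof (rule linearI)
  fix X Y :: "real^'n^'n"
  show "lin_part f (X + Y) = lin_part f X + lin_part f Y"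
    using lin_part_hollow_part[OF aff, of "X + Y"] lin_part_hollow_part[OF aff, of X]
      lin_part_hollow_part[OF aff, of Y] lin_part_add_hollow[OF aff hollow_hollow_part hollow_hollow_part, of X Y]
    by (simp add: hollow_part_add)
next
  fix c and X :: "real^'n^'n"
  show "lin_part f (c *\<^sub>R X) = c *\<^sub>R lin_part f X"
    using lin_part_hollow_part[OF aff, of "c *\<^sub>R X"] lin_part_hollow_part[OF aff, of X]
      lin_part_scaleR_hollow[OF aff hollow_hollow_part, of c X]
    by (simp add: hollow_part_scaleR)
qed

lemma affine_eq_lin_part:
  fixes f :: "real^'n^'n \<Rightarrow> real^'n^'n"
  assumes aff: "affine_on GN f" and G: "G \<in> GN"
  shows "f G = f (mat 1) + lin_part f (G - mat 1)"
proof -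
  have "mat 1 + 1 *\<^sub>R (G - mat 1) \<in> GN" using G by simp
  from lin_part_eq[OF aff GN_minus_mat1_hollow[OF G] _ this] show ?thesis
    by (simp add: incr_def)
qed

lemma affine_diff_eq_lin_part:
  fixes f :: "real^'n^'n \<Rightarrow> real^'n^'n"
  assumes aff: "affine_on GN f" and G: "G \<in> GN" and H: "H \<in> GN"
  shows "f G - f H = lin_part f (G - H)"
proof -
  have "lin_part f (G - H) = lin_part f (G - mat 1) - lin_part f (H - mat 1)"
    using linear_diff[OF linear_lin_part[OF aff], of "G - mat 1" "H - mat 1"] by simp
  then show ?thesis using affine_eq_lin_part[OF aff G] affine_eq_lin_part[OF aff H] by simp
qed

lemma lin_part_eq_0_imp:
  fixes f :: "real^'n^'n \<Rightarrow> real^'n^'n"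
  assumes aff: "affine_on GN f" and inj: "inj_on f GN" and H: "hollow H"
    and z: "lin_part f H = 0"
  shows "H = 0"
proof -
  let ?t = "safe_step H"
  have t: "?t > 0" by (rule safe_step_pos)
  have G: "mat 1 + ?t *\<^sub>R H \<in> GN" using mat1_plus_scaled_GN[OF H, of ?t] t by simp
  have "f (mat 1 + ?t *\<^sub>R H) = f (mat 1) + ?t *\<^sub>R lin_part f H"
    using affine_eq_lin_part[OF aff G] linear_lin_part[OF aff] by (simp add: linear_scale)
  then have "f (mat 1 + ?t *\<^sub>R H) = f (mat 1)" using z by simp
  then have "mat 1 + ?t *\<^sub>R H = mat 1" using inj G mat1_GN by (meson inj_onD)
  then show ?thesis using t by simp
qed

lemma Aut_inv_into_cancel:
  assumes s: "s \<in> Aut" and G: "G \<in> GN"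
  shows "s (extGN (inv_into GN s) G) = G" "extGN (inv_into GN s) (s G) = G"
proof -
  have "bij_betw s GN GN" using s unfolding Aut_def by simp
  then show "s (extGN (inv_into GN s) G) = G" "extGN (inv_into GN s) (s G) = G"
    using G Aut_GN[OF s G] by (simp_all add: extGN_def bij_betw_def f_inv_into_f inv_into_f_f)
qed

lemma Aut_inv_into:
  fixes s :: "real^'n^'n \<Rightarrow> real^'n^'n"
  assumes s: "s \<in> Aut"
  shows "extGN (inv_into GN s) \<in> Aut"
proof -
  have b: "bij_betw s GN GN" and aff: "affine_on GN s" using s unfolding Aut_def by simp_all
  have iG: "\<And>G. G \<in> GN \<Longrightarrow> inv_into GN s G \<in> GN"
    using b by (simp add: bij_betw_def inv_into_into)
  have si: "\<And>G. G \<in> GN \<Longrightarrow> s (inv_into GN s G) = G"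
    using b by (simp add: bij_betw_def f_inv_into_f)
  have inv_s: "\<And>G. G \<in> GN \<Longrightarrow> inv_into GN s (s G) = G"
    using b by (simp add: bij_betw_def inv_into_f_f)
  have "affine_on GN (inv_into GN s)"
    unfolding affine_on_def
  proof (intro ballI allI impI)
    fix x y :: "real^'n^'n" and t :: real
    assume xy: "x \<in> GN" "y \<in> GN" and t: "0 \<le> t \<and> t \<le> 1"
    let ?z = "(1 - t) *\<^sub>R inv_into GN s x + t *\<^sub>R inv_into GN s y"
    have "s ?z = (1 - t) *\<^sub>R s (inv_into GN s x) + t *\<^sub>R s (inv_into GN s y)"
      by (rule aff[unfolded affine_on_def, rule_format]) (use iG xy t in simp_all)
    then have "s ?z = (1 - t) *\<^sub>R x + t *\<^sub>R y" using si xy by simp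
    moreover have "?z \<in> GN" using GN_convex iG xy t by blast
    ultimately show "inv_into GN s ((1 - t) *\<^sub>R x + t *\<^sub>R y) = ?z" using inv_s by metis
  qed
  then show ?thesis
    by (rule extGN_Aut[where g=s, rotated 4]) (simp_all add: iG Aut_GN[OF s] inv_s si)
qed

section \<open>The vertices of \<open>G\<^sub>N\<close> are the cut matrices\<close>

definition signs :: "(real^'n) set" where
  "signs = {x. \<forall>i. x$i = 1 \<or> x$i = -1}"

definition outer :: "real^'n \<Rightarrow> real^'n^'n" where
  "outer x = (\<chi> i j. x$i * x$j)"

text \<open>A vertex in the sense of convex geometry: the normal cone at \<open>p\<close> has non-empty
  interior, i.e.\ some linear functional grows at least linearly in every direction from
  \<open>p\<close> into \<open>G\<^sub>N\<close>.\<close>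

definition vertex :: "real^'n^'n \<Rightarrow> bool" where
  "vertex p \<longleftrightarrow> p \<in> GN \<and> (\<exists>l c. linear (l :: real^'n^'n \<Rightarrow> real) \<and> c > 0 \<and>
      (\<forall>G\<in>GN. c * norm (G - p) \<le> l (G - p)))"

lemma signs_entry: "x \<in> signs \<Longrightarrow> x$i = 1 \<or> x$i = -1"
  unfolding signs_def by blast

lemma signs_entry_sq: "x \<in> signs \<Longrightarrow> x$i * x$i = 1"
  using signs_entry[of x i] by auto

lemma signs_entry_prod: "x \<in> signs \<Longrightarrow> x$i * x$j = 1 \<or> x$i * x$j = -1"
  using signs_entry[of x i] signs_entry[of x j] by auto

lemma qform_outer: "qform (outer y) v = (y \<bullet> v) * (y \<bullet> v)"
proof -
  have "qform (outer y) v = (\<Sum>u\<in>UNIV. (y$u * v$u) * (\<Sum>w\<in>UNIV. y$w * v$w))"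
    unfolding qform_def outer_def sum_distrib_left by (intro sum.cong refl) (simp add: mult_ac)
  also have "\<dots> = (y \<bullet> v) * (y \<bullet> v)"
    by (simp only: sum_distrib_right[symmetric] inner_vec_def inner_real_def)
  finally show ?thesis .
qed

lemma outer_GN: "x \<in> signs \<Longrightarrow> outer x \<in> GN"
  unfolding GN_iff qform_outer by (simp add: signs_entry_sq outer_def mult.commute)

lemma norm_le_abs_sum: "norm (X :: real^'n^'n) \<le> abs_sum X"
proof -
  have "norm X \<le> (\<Sum>i\<in>UNIV. norm (X$i))"
    unfolding norm_vec_def by (rule L2_set_le_sum) simp
  also have "\<dots> \<le> abs_sum X" unfolding abs_sum_def by (intro sum_mono norm_le_l1_cart)
  finally show ?thesis .
qed

text \<open>At the cut \<open>x x\<^sup>T\<close> every entry of \<open>G - x x\<^sup>T\<close> has the sign of \<open>-x\<^sub>i x\<^sub>j\<close>.\<close>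

lemma outer_vertex:
  fixes x :: "real^'n"
  assumes x: "x \<in> signs"
  shows "vertex (outer x)"
proof -
  define l where "l = (\<lambda>H::real^'n^'n. - (\<Sum>i\<in>UNIV. \<Sum>j\<in>UNIV. x$i * x$j * H$i$j))"
  have lin: "linear l"
    by (rule linearI) (simp_all add: l_def algebra_simps sum.distrib sum_distrib_left)
  have "1 * norm (G - outer x) \<le> l (G - outer x)" if G: "G \<in> GN" for G
  proof -
    have "- (x$i * x$j * (G - outer x)$i$j) = \<bar>(G - outer x)$i$j\<bar>" for i j
      using signs_entry_prod[OF x, of i j] GN_entry_bound[OF G, of i j]
      by (auto simp: outer_def abs_if)
    then have "l (G - outer x) = abs_sum (G - outer x)"
      unfolding l_def abs_sum_def sum_negf[symmetric] by simp
    then show ?thesis using norm_le_abs_sum[of "G - outer x"] by simp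
  qed
  then show ?thesis unfolding vertex_def using outer_GN[OF x] lin by (metis zero_less_one)
qed

lemma vertex_Aut:
  assumes s: "s \<in> Aut" and v: "vertex p"
  shows "vertex (s p)"
proof -
  let ?t = "extGN (inv_into GN s)"
  have t: "?t \<in> Aut" by (rule Aut_inv_into[OF s])
  from v obtain l c where p: "p \<in> GN" and lin: "linear l" and c: "c > 0"
    and lc: "\<forall>G\<in>GN. c * norm (G - p) \<le> l (G - p)" unfolding vertex_def by blast
  have "bounded_linear (lin_part s)"
    using linear_lin_part[OF Aut_affine[OF s]] linear_conv_bounded_linear by blast
  then obtain B where B: "B > 0" "\<And>X. norm (lin_part s X) \<le> norm X * B"
    using bounded_linear.pos_bounded by blast
  have lin': "linear (l \<circ> lin_part ?t)"
    using lin linear_lin_part[OF Aut_affine[OF t]] by (simp add: linear_compose)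
  have sp: "s p \<in> GN" using Aut_GN[OF s p] .
  have "(c / B) * norm (Y - s p) \<le> (l \<circ> lin_part ?t) (Y - s p)" if Y: "Y \<in> GN" for Y
  proof -
    let ?G = "?t Y"
    have G: "?G \<in> GN" using Aut_GN[OF t Y] .
    have e1: "Y - s p = lin_part s (?G - p)"
      using affine_diff_eq_lin_part[OF Aut_affine[OF s] G p] Aut_inv_into_cancel(1)[OF s Y] by simp
    have "?G - p = lin_part ?t (Y - s p)"
      using affine_diff_eq_lin_part[OF Aut_affine[OF t] Y sp] Aut_inv_into_cancel(2)[OF s p] by simp
    then have e2: "(l \<circ> lin_part ?t) (Y - s p) = l (?G - p)" by simp
    have "(c / B) * norm (Y - s p) \<le> (c / B) * (norm (?G - p) * B)"
      using B c e1 by (intro mult_left_mono) auto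
    also have "\<dots> = c * norm (?G - p)" using B by simp
    also have "\<dots> \<le> l (?G - p)" using lc G by blast
    finally show ?thesis using e2 by simp
  qed
  then show ?thesis unfolding vertex_def using sp lin' c B by (metis divide_pos_pos)
qed

definition unit_vec :: "'n \<Rightarrow> real^'n" where
  "unit_vec i = (\<chi> u. if u = i then 1 else 0)"

definition dyad :: "real^'n \<Rightarrow> real^'n \<Rightarrow> real^'n^'n" where
  "dyad u v = (\<chi> a b. u$a * v$b)"

lemma unit_vec_nth: "unit_vec i $ u = (if u = i then 1 else 0)"
  by (simp add: unit_vec_def)

lemma inner_unit_vec: "unit_vec i \<bullet> y = y$i" "y \<bullet> unit_vec i = y$i"
proof -
  have "unit_vec i \<bullet> y = (\<Sum>u\<in>UNIV. if u = i then y$u else 0)"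
    unfolding inner_vec_def by (intro sum.cong) (auto simp: unit_vec_def)
  then show "unit_vec i \<bullet> y = y$i" by simp
  then show "y \<bullet> unit_vec i = y$i" by (simp add: inner_commute)
qed

lemma mult_vec_unit_vec: "(G *v unit_vec k) $ u = G$u$k"
proof -
  have "(G *v unit_vec k) $ u = (\<Sum>w\<in>UNIV. if w = k then G$u$w else 0)"
    unfolding matrix_vector_mult_def by (simp add: unit_vec_def if_distrib cong: if_cong)
  then show ?thesis by simp
qed

lemma dyad_mult_vec: "dyad u v *v y = (v \<bullet> y) *\<^sub>R u"
  by (simp add: dyad_def matrix_vector_mult_def inner_vec_def vec_eq_iff sum_distrib_left mult_ac)

text \<open>Conjugating the quadratic form by the shear \<open>y \<mapsto> y + y\<^sub>i w\<close>: the second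
  hypothesis makes the \<open>y\<^sub>i\<^sup>2\<close> terms cancel.\<close>

lemma GN_rank_two_update:
  assumes p: "p \<in> GN" and mi: "m$i = 0"
    and pw: "p *v w = m + c *\<^sub>R unit_vec i" and wpw: "w \<bullet> (p *v w) + 2 * c = 0"
  shows "p + dyad (unit_vec i) m + dyad m (unit_vec i) \<in> GN"
proof -
  let ?G = "p + dyad (unit_vec i) m + dyad m (unit_vec i)"
  have "qform ?G y = qform p (y + y$i *\<^sub>R w)" for y
  proof -
    have 1: "y \<bullet> (p *v w) = m \<bullet> y + c * y$i"
      by (simp add: pw inner_add_right inner_commute inner_unit_vec)
    have 2: "w \<bullet> (p *v y) = m \<bullet> y + c * y$i"
      using GN_symmetric_inner[OF p, of w y] 1 by (simp add: inner_commute)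
    have wpw': "w \<bullet> (p *v w) = - 2 * c" using wpw by linarith
    have "qform p (y + y$i *\<^sub>R w) =
        y \<bullet> (p *v y) + y$i * (y \<bullet> (p *v w)) + y$i * (w \<bullet> (p *v y)) + y$i * y$i * (w \<bullet> (p *v w))"
      by (simp add: qform_eq_inner algebra_simps inner_add_left inner_add_right)
    also have "\<dots> = y \<bullet> (p *v y) + 2 * y$i * (m \<bullet> y)"
      unfolding 1 2 wpw' by (simp add: algebra_simps)
    also have "\<dots> = qform ?G y"
      by (simp add: qform_eq_inner algebra_simps dyad_mult_vec inner_add_right inner_unit_vec
          inner_commute)
    finally show ?thesis ..
  qed
  moreover have "?G$u$v = ?G$v$u" for u v
    using GN_sym[OF p, of u v] by (simp add: dyad_def mult_ac)
  moreover have "?G$u$u = 1" for u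
    using GN_diag[OF p, of u] mi by (cases "u = i") (auto simp: dyad_def unit_vec_def)
  ultimately show ?thesis using GN_psd[OF p] unfolding GN_iff by metis
qed

lemma GN_conjugate_vector:
  assumes p: "p \<in> GN" and ik: "i \<noteq> k" and lt: "\<bar>p$i$k\<bar> < 1"
  obtains c where "(p *v c) $ i = 0" "(p *v c) $ k \<noteq> 0" "c \<bullet> (p *v c) = 1"
proof -
  define \<beta> where "\<beta> = p$i$k"
  have "0 < (1 - \<beta>) * (1 + \<beta>)"
    using lt unfolding \<beta>_def by (intro mult_pos_pos) (simp_all add: abs_less_iff)
  then have bpos: "1 - \<beta> * \<beta> > 0" by (simp add: algebra_simps)
  define \<alpha> where "\<alpha> = 1 / sqrt (1 - \<beta> * \<beta>)"
  have apos: "\<alpha> > 0" using bpos by (simp add: \<alpha>_def)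
  have asq: "\<alpha> * \<alpha> * (1 - \<beta> * \<beta>) = 1" using bpos by (simp add: \<alpha>_def)
  define c where "c = \<alpha> *\<^sub>R (unit_vec k - \<beta> *\<^sub>R unit_vec i)"
  have pii: "p$i$i = 1" "p$k$k = 1" using GN_diag[OF p] by auto
  have pki: "p$k$i = \<beta>" using GN_sym[OF p, of k i] by (simp add: \<beta>_def)
  have dcomp: "(p *v c) $ u = \<alpha> * (p$u$k - \<beta> * p$u$i)" for u
    by (simp add: c_def algebra_simps mult_vec_unit_vec)
  have di: "(p *v c) $ i = 0" using dcomp[of i] pii by (simp add: \<beta>_def)
  have dk: "(p *v c) $ k = \<alpha> * (1 - \<beta> * \<beta>)" using dcomp[of k] pii pki by simp
  have "c \<bullet> (p *v c) = 1"
    using di dk asq by (simp add: c_def inner_diff_left inner_unit_vec mult_ac)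
  then show ?thesis using that di dk apos bpos by simp
qed

text \<open>Through a point \<open>p\<close> with an entry \<open>\<bar>p\<^sub>i\<^sub>k\<bar> < 1\<close> passes a curve in \<open>G\<^sub>N\<close> that is
  tangent to the direction \<open>D\<close> at \<open>p\<close> and curves only quadratically away from it.\<close>

lemma GN_curve_through:
  assumes p: "p \<in> GN" and ik: "i \<noteq> k" and lt: "\<bar>p$i$k\<bar> < 1"
  obtains A D where "D \<noteq> 0" "\<And>b. \<bar>b\<bar> \<le> 1 \<Longrightarrow> p + (sqrt (1 - b\<^sup>2) - 1) *\<^sub>R A + b *\<^sub>R D \<in> GN"
proof -
  obtain c where c: "(p *v c) $ i = 0" "(p *v c) $ k \<noteq> 0" "c \<bullet> (p *v c) = 1"
    by (rule GN_conjugate_vector[OF p ik lt])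
  define e where "e = unit_vec i"
  define d where "d = p *v c"
  define r where "r = p *v e - e"
  have di: "d$i = 0" and dk: "d$k \<noteq> 0" and cd: "c \<bullet> d = 1" using c by (simp_all add: d_def)
  have ri: "r$i = 0" using GN_diag[OF p] by (simp add: r_def e_def mult_vec_unit_vec unit_vec_nth)
  have cr: "c \<bullet> r = - c$i"
    using GN_symmetric_inner[OF p, of c e] c(1)
    by (simp add: r_def inner_diff_right e_def inner_unit_vec)
  define A where "A = dyad e r + dyad r e"
  define D where "D = dyad e d + dyad d e"
  have "D$i$k = d$k" using ik di by (simp add: D_def dyad_def e_def unit_vec_def)
  then have "D \<noteq> 0" using dk by auto
  moreover have "p + (sqrt (1 - b\<^sup>2) - 1) *\<^sub>R A + b *\<^sub>R D \<in> GN" if b: "\<bar>b\<bar> \<le> 1" for b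
  proof -
    define a where "a = sqrt (1 - b\<^sup>2)"
    have "b * b \<le> 1" using mult_mono[OF b b] by (simp add: abs_mult_self_eq)
    then have asq2: "a * a = 1 - b * b" by (simp add: a_def power2_eq_square)
    define m where "m = (a - 1) *\<^sub>R r + b *\<^sub>R d"
    define w where "w = (a - 1) *\<^sub>R e + b *\<^sub>R c"
    have pw: "p *v w = m + (a - 1) *\<^sub>R e"
      by (simp add: w_def m_def r_def d_def algebra_simps)
    have "m$i = 0" using ri di by (simp add: m_def)
    then have wm: "w \<bullet> m = b * (c \<bullet> m)" by (simp add: w_def e_def inner_add_left inner_unit_vec)
    have "w \<bullet> (p *v w) = w \<bullet> m + (a - 1) * (w \<bullet> e)" by (simp add: pw inner_add_right)
    also have "\<dots> = b * b + (a - 1) * (a - 1)"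
      unfolding wm by (simp add: m_def w_def inner_add_left inner_add_right cr cd e_def
          inner_unit_vec unit_vec_nth algebra_simps)
    finally have "w \<bullet> (p *v w) + 2 * (a - 1) = 0" using asq2 by (simp add: algebra_simps)
    then have "p + dyad e m + dyad m e \<in> GN"
      using GN_rank_two_update[OF p \<open>m$i = 0\<close> pw[unfolded e_def]] by (simp add: e_def)
    moreover have "p + dyad e m + dyad m e = p + (a - 1) *\<^sub>R A + b *\<^sub>R D"
      by (simp add: A_def D_def m_def dyad_def vec_eq_iff algebra_simps)
    ultimately show ?thesis by (simp add: a_def)
  qed
  ultimately show ?thesis using that by blast
qed

lemma vertex_curve_bound:
  fixes p A D :: "real^'n^'n"
  assumes lin: "linear l" and c: "c > 0" and lc: "\<forall>G\<in>GN. c * norm (G - p) \<le> l (G - p)"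
    and curve: "\<And>b. \<bar>b\<bar> \<le> 1 \<Longrightarrow> p + (sqrt (1 - b\<^sup>2) - 1) *\<^sub>R A + b *\<^sub>R D \<in> GN"
    and b: "0 < b" "b \<le> 1"
  shows "c * norm D \<le> b * \<bar>l A\<bar>"
proof -
  define a where "a = sqrt (1 - b\<^sup>2)"
  have b2: "b\<^sup>2 \<le> 1" using b by (simp add: power_le_one)
  have "(1 - b\<^sup>2)\<^sup>2 \<le> 1 - b\<^sup>2"
    using mult_left_le[of "1 - b\<^sup>2" "1 - b\<^sup>2"] b2 b by (simp add: power2_eq_square)
  then have a1: "1 - a \<le> b\<^sup>2" using real_le_rsqrt by (force simp: a_def)
  have a1': "a \<le> 1" using b2 by (simp add: a_def)
  have on_curve: "c * norm ((a - 1) *\<^sub>R A + b' *\<^sub>R D) \<le> (a - 1) * l A + b' * l D"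
    if "b' = b \<or> b' = - b" for b'
  proof -
    have "p + (a - 1) *\<^sub>R A + b' *\<^sub>R D \<in> GN"
      using curve[of b'] that b by (auto simp: a_def)
    then show ?thesis using lc lin by (force simp: linear_add linear_scale)
  qed
  have "(2 * b) *\<^sub>R D = ((a - 1) *\<^sub>R A + b *\<^sub>R D) - ((a - 1) *\<^sub>R A + (- b) *\<^sub>R D)"
    by (simp add: vec_eq_iff algebra_simps)
  then have "norm ((2 * b) *\<^sub>R D) \<le> norm ((a - 1) *\<^sub>R A + b *\<^sub>R D) + norm ((a - 1) *\<^sub>R A + (- b) *\<^sub>R D)"
    by (metis norm_triangle_ineq4)
  then have "c * (2 * b * norm D) \<le>
      c * (norm ((a - 1) *\<^sub>R A + b *\<^sub>R D) + norm ((a - 1) *\<^sub>R A + (- b) *\<^sub>R D))"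
    using c b by (intro mult_left_mono) auto
  also have "\<dots> \<le> 2 * ((a - 1) * l A)" using on_curve[of b] on_curve[of "- b"] by (simp add: algebra_simps)
  also have "\<dots> \<le> 2 * ((1 - a) * \<bar>l A\<bar>)" using a1' mult_left_mono[OF abs_ge_minus_self[of "l A"], of "1 - a"]
    by (simp add: algebra_simps)
  also have "\<dots> \<le> 2 * (b\<^sup>2 * \<bar>l A\<bar>)" using a1 by (intro mult_left_mono mult_right_mono) auto
  finally have "b * (c * norm D) \<le> b * (b * \<bar>l A\<bar>)" by (simp add: power2_eq_square algebra_simps)
  then show ?thesis using b by simp
qed

lemma not_vertex:
  assumes p: "p \<in> GN" and ik: "i \<noteq> k" and lt: "\<bar>p$i$k\<bar> < 1"
  shows "\<not> vertex p"
proof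
  assume "vertex p"
  then obtain l c where lin: "linear l" and c: "c > 0"
    and lc: "\<forall>G\<in>GN. c * norm (G - p) \<le> l (G - p)" unfolding vertex_def by blast
  obtain A D where D: "D \<noteq> 0"
    and curve: "\<And>b. \<bar>b\<bar> \<le> 1 \<Longrightarrow> p + (sqrt (1 - b\<^sup>2) - 1) *\<^sub>R A + b *\<^sub>R D \<in> GN"
    using GN_curve_through[OF p ik lt] by blast
  define K where "K = \<bar>l A\<bar>"
  define b where "b = min 1 (c * norm D / (2 * (K + 1)))"
  have K: "K \<ge> 0" by (simp add: K_def)
  have cD: "c * norm D > 0" using c D by simp
  have b: "0 < b" "b \<le> 1" using cD K by (simp_all add: b_def)
  have "b * K \<le> (c * norm D / (2 * (K + 1))) * K" using K by (intro mult_right_mono) (auto simp: b_def)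
  also have "\<dots> = c * norm D * (K / (2 * (K + 1)))" by simp
  also have "\<dots> < c * norm D * 1" using K cD by (intro mult_strict_left_mono) auto
  finally show False
    using vertex_curve_bound[OF lin c lc curve b] by (simp add: K_def)
qed

lemma GN_pm1_entries_eq_outer:
  fixes p :: "real^'n^'n"
  assumes p: "p \<in> GN" and pm: "\<And>i k. p$i$k = 1 \<or> p$i$k = -1"
  shows "p \<in> outer ` signs"
proof -
  define a :: 'n where "a = undefined"
  define x where "x = (\<chi> j. p$a$j)"
  have x: "x \<in> signs" unfolding signs_def x_def using pm by simp
  have xa: "x$a = 1" using GN_diag[OF p] by (simp add: x_def)
  have off: "p$i$j = x$i * x$j" if ij: "i \<noteq> j" and ia: "i \<noteq> a" and ja: "j \<noteq> a" for i j
  proof -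
    define y where "y = (\<chi> u. if u = i then x$i else if u = j then x$j else if u = a then -1 else (0::real))"
    have yv: "y$i = x$i" "y$j = x$j" "y$a = -1" using ij ia ja by (auto simp: y_def)
    have "qform p y = (\<Sum>u\<in>{i,j,a}. \<Sum>w\<in>{i,j,a}. y$u * p$u$w * y$w)"
      by (rule qform_supp) (simp add: y_def)
    also have "\<dots> = y$i * p$i$i * y$i + y$i * p$i$j * y$j + y$i * p$i$a * y$a
       + (y$j * p$j$i * y$i + y$j * p$j$j * y$j + y$j * p$j$a * y$a)
       + (y$a * p$a$i * y$i + y$a * p$a$j * y$j + y$a * p$a$a * y$a)"
      using ij ia ja by (simp add: sum.insert algebra_simps)
    also have "\<dots> = 2 * (x$i * x$j * p$i$j) - 1"
      using GN_diag[OF p, of i] GN_diag[OF p, of j] GN_diag[OF p, of a]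
        GN_sym[OF p, of i j] GN_sym[OF p, of i a] GN_sym[OF p, of j a]
        signs_entry_sq[OF x, of i] signs_entry_sq[OF x, of j]
      unfolding yv by (simp add: x_def algebra_simps)
    finally have "0 \<le> 2 * (x$i * x$j * p$i$j) - 1" using GN_psd[OF p, of y] by simp
    then show ?thesis using pm[of i j] signs_entry[OF x, of i] signs_entry[OF x, of j] by auto
  qed
  have "p$i$j = x$i * x$j" for i j
  proof -
    consider "i = j" | "i \<noteq> j" "i = a" | "i \<noteq> j" "j = a" | "i \<noteq> j" "i \<noteq> a" "j \<noteq> a" by blast
    then show ?thesis
    proof cases
      case 1 then show ?thesis using GN_diag[OF p, of i] signs_entry_sq[OF x, of i] by simp
    next
      case 2 then show ?thesis using xa by (simp add: x_def)
    next
      case 3 then show ?thesis using xa GN_sym[OF p, of i a] by (simp add: x_def)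
    next
      case 4 then show ?thesis by (rule off)
    qed
  qed
  then have "p = outer x" by (simp add: vec_eq_iff outer_def)
  then show ?thesis using x by blast
qed

lemma vertex_iff_outer:
  assumes p: "p \<in> GN"
  shows "vertex p \<longleftrightarrow> p \<in> outer ` signs"
proof
  assume v: "vertex p"
  have "p$i$k = 1 \<or> p$i$k = -1" for i k
  proof (cases "i = k")
    case True then show ?thesis using GN_diag[OF p] by simp
  next
    case False
    then have "\<not> \<bar>p$i$k\<bar> < 1" using not_vertex[OF p] v by blast
    then show ?thesis using GN_entry_bound[OF p, of i k] by (auto simp: abs_if split: if_splits)
  qed
  then show "p \<in> outer ` signs" by (rule GN_pm1_entries_eq_outer[OF p])
qed (auto intro: outer_vertex)

section \<open>Automorphisms permute the cuts and fix the identity\<close>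

definition flip :: "'n \<Rightarrow> real^'n \<Rightarrow> real^'n" where
  "flip t x = (\<chi> u. if u = t then - x$u else x$u)"

definition ones :: "real^'n" where
  "ones = (\<chi> u. 1)"

lemma flip_nth: "flip t x $ u = (if u = t then - x$u else x$u)"
  by (simp add: flip_def)

lemma flip_flip: "flip t (flip t x) = x"
  by (simp add: flip_def vec_eq_iff)

lemma flip_signs: "x \<in> signs \<Longrightarrow> flip t x \<in> signs"
  unfolding signs_def flip_def by auto

lemma ones_signs: "ones \<in> signs"
  by (simp add: ones_def signs_def)

lemma signs_uminus: "x \<in> signs \<Longrightarrow> - x \<in> signs"
  unfolding signs_def by auto

lemma outer_uminus: "outer (- x) = outer x"
  by (simp add: outer_def)

lemma finite_signs: "finite (signs :: (real^'n) set)"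
proof -
  have "signs \<subseteq> vec_lambda ` (PiE (UNIV :: 'n set) (\<lambda>_. {-1, 1::real}))"
  proof
    fix x :: "real^'n" assume x: "x \<in> signs"
    have "(\<lambda>i. x$i) \<in> PiE UNIV (\<lambda>_. {-1, 1::real})" using x unfolding signs_def by auto
    then show "x \<in> vec_lambda ` (PiE (UNIV :: 'n set) (\<lambda>_. {-1, 1::real}))"
      by (metis image_eqI vec_lambda_eta)
  qed
  moreover have "finite (PiE (UNIV :: 'n set) (\<lambda>_. {-1, 1::real}))" by (rule finite_PiE) auto
  ultimately show ?thesis using finite_surj by blast
qed

lemma card_signs_pos: "card (signs :: (real^'n) set) > 0"
  using finite_signs ones_signs by (auto simp: card_gt_0_iff)

lemma outer_eq_outerD:
  fixes x y :: "real^'n"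
  assumes x: "x \<in> signs" and y: "y \<in> signs" and e: "outer x = outer y"
  shows "y = x \<or> y = - x"
proof -
  fix i :: 'n
  have ent: "x$u * x$w = y$u * y$w" for u w using e by (simp add: outer_def vec_eq_iff)
  define c where "c = x$i * y$i"
  have "y$u = c * x$u" for u
  proof -
    have "y$u = (y$i * y$i) * y$u" using signs_entry_sq[OF y, of i] by simp
    also have "\<dots> = y$i * (x$i * x$u)" by (simp only: mult.assoc ent)
    finally show ?thesis by (simp add: c_def mult_ac)
  qed
  moreover have "c = 1 \<or> c = -1"
    using signs_entry[OF x, of i] signs_entry[OF y, of i] by (auto simp: c_def)
  ultimately show ?thesis by (auto simp: vec_eq_iff)
qed

lemma sum_eq_0_by_involution:
  fixes f :: "'a \<Rightarrow> real"
  assumes g: "\<And>x. x \<in> X \<Longrightarrow> g x \<in> X" "\<And>x. x \<in> X \<Longrightarrow> g (g x) = x"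
    and fg: "\<And>x. x \<in> X \<Longrightarrow> f (g x) = - f x"
  shows "sum f X = 0"
proof -
  have "sum f X = sum (\<lambda>x. f (g x)) X"
    by (rule sum.reindex_bij_witness[where i=g and j=g]) (use g in auto)
  also have "\<dots> = - sum f X" using fg by (simp add: sum_negf)
  finally show ?thesis by simp
qed

lemma sum_signs_prod:
  "(\<Sum>x\<in>(signs :: (real^'n) set). x$a * x$b) = (if a = b then real (card (signs :: (real^'n) set)) else 0)"
proof (cases "a = b")
  case False
  then have "(\<Sum>x\<in>(signs :: (real^'n) set). x$a * x$b) = 0"
    by (intro sum_eq_0_by_involution[where g="flip a"]) (auto simp: flip_signs flip_flip flip_nth)
  then show ?thesis using False by simp
qed (simp add: signs_entry_sq)

definition sign_class :: "'n \<Rightarrow> 'n \<Rightarrow> real \<Rightarrow> (real^'n) set" where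
  "sign_class i j s = {x\<in>signs. x$i * x$j = s}"

definition sym_unit :: "'n \<Rightarrow> 'n \<Rightarrow> real^'n^'n" where
  "sym_unit i j = (\<chi> u w. if (u = i \<and> w = j) \<or> (u = j \<and> w = i) then 1 else 0)"

lemma sign_class_subset: "sign_class i j s \<subseteq> signs"
  by (auto simp: sign_class_def)

lemma card_sign_class:
  fixes i j :: "'n::finite"
  assumes ij: "i \<noteq> j" and s: "s = 1 \<or> s = -1"
  shows "2 * card (sign_class i j s) = card (signs :: (real^'n) set)"
proof -
  let ?A = "sign_class i j s" and ?B = "signs - sign_class i j s"
  have "bij_betw (flip i) ?A ?B"
  proof (rule bij_betw_byWitness[where f'="flip i"])
    show "\<forall>a\<in>?A. flip i (flip i a) = a" "\<forall>a\<in>?B. flip i (flip i a) = a" by (simp_all add: flip_flip)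
    show "flip i ` ?A \<subseteq> ?B" using ij s by (auto simp: sign_class_def flip_signs flip_nth)
    show "flip i ` ?B \<subseteq> ?A"
      using ij s signs_entry_prod by (fastforce simp: sign_class_def flip_signs flip_nth)
  qed
  then have "card ?A = card ?B" by (rule bij_betw_same_card)
  moreover have "?A \<union> ?B = signs" by (auto simp: sign_class_def)
  then have "card (signs :: (real^'n) set) = card ?A + card ?B"
    using card_Un_disjoint[of ?A ?B] finite_signs by (metis Diff_disjoint finite_Un)
  ultimately show ?thesis by linarith
qed

lemma sign_class_nonempty:
  fixes i j :: "'n::finite"
  assumes "i \<noteq> j" "s = 1 \<or> s = -1"
  shows "sign_class i j s \<noteq> {}"
  using card_sign_class[OF assms] card_signs_pos[where 'n='n] by auto

lemma sum_sign_class_prod: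
  fixes i j a b :: "'n::finite"
  assumes ij: "i \<noteq> j"
  shows "(\<Sum>x\<in>sign_class i j s. x$a * x$b) =
    (if a = b then real (card (sign_class i j s))
     else if (a = i \<and> b = j) \<or> (a = j \<and> b = i) then s * real (card (sign_class i j s)) else 0)"
proof (cases "a = b")
  case True then show ?thesis by (simp add: sign_class_def signs_entry_sq)
next
  case ab: False
  show ?thesis
  proof (cases "(a = i \<and> b = j) \<or> (a = j \<and> b = i)")
    case True
    then have "x$a * x$b = x$i * x$j" for x :: "real^'n" by (auto simp: mult.commute)
    then show ?thesis using True ab by (simp add: sign_class_def)
  next
    case F: False
    obtain t where t: "t = a \<or> t = b" "t \<noteq> i" "t \<noteq> j" using F ab by blast
    have "(\<Sum>x\<in>sign_class i j s. x$a * x$b) = 0"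
      by (rule sum_eq_0_by_involution[where g="flip t"])
        (use t ab in \<open>auto simp: sign_class_def flip_signs flip_nth flip_flip\<close>)
    then show ?thesis using F ab by auto
  qed
qed

definition cut_avg :: "(real^'n) set \<Rightarrow> real^'n^'n" where
  "cut_avg S = (1 / real (card S)) *\<^sub>R (\<Sum>x\<in>S. outer x)"

lemma cut_avg_signs: "cut_avg (signs :: (real^'n) set) = mat 1"
  using card_signs_pos by (simp add: cut_avg_def vec_eq_iff outer_def sum_signs_prod mat_def)

lemma cut_avg_sign_class:
  assumes ij: "i \<noteq> j" and s: "s = 1 \<or> s = -1"
  shows "cut_avg (sign_class i j s) = mat 1 + s *\<^sub>R sym_unit i j"
proof -
  have "card (sign_class i j s) > 0"
    using sign_class_nonempty[OF ij s] finite_signs sign_class_subset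
    by (metis card_gt_0_iff finite_subset)
  then show ?thesis
    using ij by (auto simp: cut_avg_def vec_eq_iff outer_def sum_sign_class_prod mat_def sym_unit_def)
qed

lemma qform_cut_avg:
  "qform (cut_avg S) v = (1 / real (card S)) * (\<Sum>x\<in>S. (x \<bullet> v) * (x \<bullet> v))"
  by (simp add: cut_avg_def qform_scaleR qform_sum qform_outer)

lemma cut_avg_GN:
  assumes S: "S \<subseteq> signs" "S \<noteq> {}"
  shows "cut_avg S \<in> GN"
proof -
  have c: "card S > 0" using S finite_signs finite_subset by (auto simp: card_gt_0_iff)
  have "(\<Sum>x\<in>S. x$a * x$a) = (\<Sum>x\<in>S. 1::real)" for a
    using S(1) by (intro sum.cong) (auto simp: signs_entry_sq)
  moreover have "0 \<le> qform (cut_avg S) v" for v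
    unfolding qform_cut_avg by (simp add: sum_nonneg)
  ultimately show ?thesis
    using c unfolding GN_iff by (simp add: cut_avg_def outer_def mult.commute)
qed

lemma Aut_cut_avg:
  fixes s :: "real^'n^'n \<Rightarrow> real^'n^'n"
  assumes s: "s \<in> Aut" and S: "S \<subseteq> signs" "S \<noteq> {}"
  shows "s (cut_avg S) = (1 / real (card S)) *\<^sub>R (\<Sum>x\<in>S. s (outer x))"
proof -
  have aff: "affine_on GN s" using s by (rule Aut_affine)
  have lin: "linear (lin_part s)" by (rule linear_lin_part[OF aff])
  have c: "card S > 0" using S finite_signs finite_subset by (auto simp: card_gt_0_iff)
  have "(\<Sum>x\<in>S. outer x - mat 1) = (\<Sum>x\<in>S. outer x) - real (card S) *\<^sub>R mat 1"
    by (simp add: sum_subtractf sum_constant_scaleR del: sum_constant)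
  then have "cut_avg S - mat 1 = (1 / real (card S)) *\<^sub>R (\<Sum>x\<in>S. outer x - mat 1)"
    using c by (simp add: cut_avg_def scaleR_diff_right)
  then have "s (cut_avg S) = s (mat 1) + (1 / real (card S)) *\<^sub>R (\<Sum>x\<in>S. lin_part s (outer x - mat 1))"
    using affine_eq_lin_part[OF aff cut_avg_GN[OF S]] lin by (simp add: linear_scale linear_sum)
  also have "\<dots> = (1 / real (card S)) *\<^sub>R (\<Sum>x\<in>S. s (mat 1) + lin_part s (outer x - mat 1))"
    using c by (simp add: sum.distrib scaleR_add_right sum_constant_scaleR del: sum_constant)
  also have "\<dots> = (1 / real (card S)) *\<^sub>R (\<Sum>x\<in>S. s (outer x))"
    using affine_eq_lin_part[OF aff outer_GN] S(1) by (auto intro!: sum.cong)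
  finally show ?thesis .
qed

lemma Aut_outer:
  fixes s :: "real^'n^'n \<Rightarrow> real^'n^'n"
  assumes s: "s \<in> Aut" and x: "x \<in> signs"
  shows "\<exists>y\<in>signs. s (outer x) = outer y"
  using vertex_Aut[OF s outer_vertex[OF x]] vertex_iff_outer Aut_GN[OF s outer_GN[OF x]] by blast

text \<open>The sign vector of the cut \<open>s (x x\<^sup>T)\<close> is only determined up to sign; it is
  normalised to agree with \<open>x\<close> at one fixed coordinate, which makes \<open>cut_map s\<close>
  injective.\<close>

definition cut_map :: "(real^'n^'n \<Rightarrow> real^'n^'n) \<Rightarrow> real^'n \<Rightarrow> real^'n" where
  "cut_map s x = (SOME y. y \<in> signs \<and> s (outer x) = outer y \<and> y $ undefined = x $ undefined)"

lemma cut_map: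
  fixes s :: "real^'n^'n \<Rightarrow> real^'n^'n"
  assumes s: "s \<in> Aut" and x: "x \<in> signs"
  shows "cut_map s x \<in> signs" "s (outer x) = outer (cut_map s x)"
    "cut_map s x $ undefined = x $ undefined"
proof -
  obtain y where y: "y \<in> signs" "s (outer x) = outer y" using Aut_outer[OF s x] by blast
  have "\<exists>y. y \<in> signs \<and> s (outer x) = outer y \<and> y $ undefined = x $ undefined"
  proof (cases "y $ undefined = x $ undefined")
    case False
    then have "(- y) $ undefined = x $ undefined"
      using signs_entry[OF y(1), of undefined] signs_entry[OF x, of undefined] by auto
    then show ?thesis using y signs_uminus[OF y(1)] outer_uminus[of y] by metis
  qed (use y in blast)
  from someI_ex[OF this]
  show "cut_map s x \<in> signs" "s (outer x) = outer (cut_map s x)"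
    "cut_map s x $ undefined = x $ undefined"
    unfolding cut_map_def by auto
qed

lemma inj_on_cut_map:
  fixes s :: "real^'n^'n \<Rightarrow> real^'n^'n"
  assumes s: "s \<in> Aut"
  shows "inj_on (cut_map s) signs"
proof (rule inj_onI)
  fix x y :: "real^'n" assume x: "x \<in> signs" and y: "y \<in> signs" and e: "cut_map s x = cut_map s y"
  have "s (outer x) = s (outer y)" using cut_map(2)[OF s x] cut_map(2)[OF s y] e by simp
  then have "outer x = outer y" using Aut_inj_on[OF s] outer_GN[OF x] outer_GN[OF y] by (meson inj_onD)
  then have "y = x \<or> y = - x" by (rule outer_eq_outerD[OF x y])
  moreover have "x $ undefined = y $ undefined"
    using cut_map(3)[OF s x] cut_map(3)[OF s y] e by simp
  moreover have "x $ undefined \<noteq> 0" using signs_entry[OF x, of undefined] by auto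
  ultimately show "x = y" by auto
qed

lemma cut_map_image:
  fixes s :: "real^'n^'n \<Rightarrow> real^'n^'n"
  assumes s: "s \<in> Aut"
  shows "cut_map s ` signs = signs"
  by (rule endo_inj_surj[OF finite_signs _ inj_on_cut_map[OF s]]) (use cut_map(1)[OF s] in blast)

lemma Aut_cut_avg_cut_map:
  fixes s :: "real^'n^'n \<Rightarrow> real^'n^'n"
  assumes s: "s \<in> Aut" and S: "S \<subseteq> signs" "S \<noteq> {}"
  shows "s (cut_avg S) = cut_avg (cut_map s ` S)"
proof -
  have inj: "inj_on (cut_map s) S" using inj_on_cut_map[OF s] S(1) by (rule inj_on_subset)
  have "s (cut_avg S) = (1 / real (card S)) *\<^sub>R (\<Sum>x\<in>S. outer (cut_map s x))"
    using Aut_cut_avg[OF s S] cut_map(2)[OF s] S(1) by (simp add: subset_iff)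
  also have "(\<Sum>x\<in>S. outer (cut_map s x)) = (\<Sum>y\<in>cut_map s ` S. outer y)"
    using sum.reindex[OF inj, of outer] by simp
  also have "card S = card (cut_map s ` S)" using card_image[OF inj] by simp
  finally show ?thesis unfolding cut_avg_def .
qed

lemma Aut_mat1:
  fixes s :: "real^'n^'n \<Rightarrow> real^'n^'n"
  assumes s: "s \<in> Aut"
  shows "s (mat 1) = mat 1"
  using Aut_cut_avg_cut_map[OF s subset_refl] cut_map_image[OF s] cut_avg_signs ones_signs
  by (metis empty_iff)

lemma lin_part_Aut:
  fixes s :: "real^'n^'n \<Rightarrow> real^'n^'n"
  assumes s: "s \<in> Aut" and G: "G \<in> GN"
  shows "lin_part s (G - mat 1) = s G - mat 1"
  using affine_eq_lin_part[OF Aut_affine[OF s] G] Aut_mat1[OF s] by simp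

section \<open>Automorphisms preserve singularity\<close>

definition singular :: "real^'n^'n \<Rightarrow> bool" where
  "singular p \<longleftrightarrow> (\<exists>v. v \<noteq> 0 \<and> qform p v = 0)"

text \<open>\<open>p\<close> lies in the core of \<open>G\<^sub>N\<close>: every segment from a point of \<open>G\<^sub>N\<close> to \<open>p\<close> can be
  prolonged beyond \<open>p\<close> inside \<open>G\<^sub>N\<close>. This is an affine notion, and for \<open>p \<in> G\<^sub>N\<close> it
  is equivalent to non-singularity.\<close>

definition core_point :: "real^'n^'n \<Rightarrow> bool" where
  "core_point p \<longleftrightarrow> (\<forall>q\<in>GN. \<exists>e>0. p + e *\<^sub>R (p - q) \<in> GN)"

lemma singular_not_core_point:
  assumes "singular p"
  shows "\<not> core_point p"
proof
  assume "core_point p"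
  then obtain e where e: "e > 0" and r: "p + e *\<^sub>R (p - mat 1) \<in> GN"
    using mat1_GN unfolding core_point_def by blast
  obtain v where v: "v \<noteq> 0" "qform p v = 0" using assms unfolding singular_def by blast
  have "qform (p + e *\<^sub>R (p - mat 1)) v = - e * (v \<bullet> v)"
    using v(2) by (simp add: qform_add qform_scaleR qform_mat1 qform_diff)
  moreover have "v \<bullet> v > 0" using v(1) by simp
  ultimately have "qform (p + e *\<^sub>R (p - mat 1)) v < 0" using e by simp
  then show False using GN_psd[OF r, of v] by simp
qed

lemma GN_qform_le:
  fixes q :: "real^'n^'n"
  assumes q: "q \<in> GN"
  shows "qform q v \<le> real CARD('n) * (v \<bullet> v)"
proof -
  have bound: "\<bar>v$u * q$u$w * v$w\<bar> \<le> (v$u * v$u + v$w * v$w) / 2" for u w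
  proof -
    have "\<bar>v$u * q$u$w * v$w\<bar> \<le> 1 * (\<bar>v$u\<bar> * \<bar>v$w\<bar>)"
      unfolding abs_mult by (subst mult.commute, subst mult.assoc, rule mult_right_mono)
        (use GN_entry_bound[OF q, of u w] in \<open>simp_all add: mult.commute\<close>)
    also have "\<dots> \<le> (v$u * v$u + v$w * v$w) / 2"
    proof -
      have "0 \<le> (\<bar>v$u\<bar> - \<bar>v$w\<bar>)^2" by simp
      then show ?thesis by (simp add: power2_eq_square algebra_simps abs_mult_self_eq)
    qed
    finally show ?thesis .
  qed
  have "qform q v \<le> (\<Sum>u\<in>UNIV. \<Sum>w\<in>UNIV. \<bar>v$u * q$u$w * v$w\<bar>)"
    unfolding qform_def by (rule order_trans[OF abs_ge_self order_trans[OF sum_abs]]) (intro sum_mono sum_abs)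
  also have "\<dots> \<le> (\<Sum>u\<in>UNIV. \<Sum>w\<in>UNIV. (v$u * v$u + v$w * v$w) / 2)"
    by (intro sum_mono bound)
  also have "\<dots> = real CARD('n) * (v \<bullet> v)"
    by (simp add: inner_vec_def sum.distrib add_divide_distrib sum_divide_distrib[symmetric]
        sum_distrib_left[symmetric])
  finally show ?thesis .
qed

lemma not_singular_qform_ge:
  fixes p :: "real^'n^'n"
  assumes p: "p \<in> GN" and ns: "\<not> singular p"
  obtains d where "d > 0" "\<And>v. d * (v \<bullet> v) \<le> qform p v"
proof -
  have cont: "continuous_on (sphere 0 1) (\<lambda>v::real^'n. v \<bullet> (p *v v))"
    by (intro continuous_intros linear_continuous_on matrix_vector_mul_bounded_linear)
  obtain u where u: "u \<in> sphere 0 1" and umin: "\<forall>y\<in>sphere 0 1. u \<bullet> (p *v u) \<le> y \<bullet> (p *v y)"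
    using continuous_attains_inf[OF compact_sphere _ cont] by auto
  define d where "d = qform p u"
  have "u \<noteq> 0" using u by auto
  then have d: "d > 0"
    using ns GN_psd[OF p, of u] unfolding singular_def d_def by force
  have "d * (v \<bullet> v) \<le> qform p v" for v
  proof (cases "v = 0")
    case True then show ?thesis by (simp add: qform_def)
  next
    case False
    define w where "w = (1 / norm v) *\<^sub>R v"
    have "v = norm v *\<^sub>R w" using False by (simp add: w_def)
    have "w \<in> sphere 0 1" using False by (simp add: w_def)
    then have "d \<le> qform p w" using umin by (simp add: d_def qform_eq_inner)
    then have "d * (norm v * norm v) \<le> qform p w * (norm v * norm v)"
      by (intro mult_right_mono) simp_all
    moreover have "qform p v = norm v * norm v * qform p w"
      using False by (subst (1) \<open>v = norm v *\<^sub>R w\<close>[unfolded w_def]) (simp add: w_def qform_scaleR_vec)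
    moreover have "v \<bullet> v = norm v * norm v" by (simp add: dot_square_norm power2_eq_square)
    ultimately show ?thesis by (simp add: mult_ac)
  qed
  then show ?thesis using d that by blast
qed

lemma not_singular_core_point:
  fixes p :: "real^'n^'n"
  assumes p: "p \<in> GN" and ns: "\<not> singular p"
  shows "core_point p"
  unfolding core_point_def
proof
  fix q :: "real^'n^'n" assume q: "q \<in> GN"
  obtain d where d: "d > 0" and dp: "\<And>v. d * (v \<bullet> v) \<le> qform p v"
    using not_singular_qform_ge[OF p ns] by blast
  define e where "e = d / real CARD('n)"
  have e: "e > 0" using d by (simp add: e_def)
  let ?r = "p + e *\<^sub>R (p - q)"
  have "0 \<le> qform ?r v" for v
  proof -
    have "e * qform q v \<le> e * (real CARD('n) * (v \<bullet> v))"
      using GN_qform_le[OF q, of v] e by (simp add: mult_left_mono)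
    also have "\<dots> \<le> qform p v" using dp[of v] by (simp add: e_def)
    finally have "e * qform q v \<le> qform p v" .
    moreover have "0 \<le> e * qform p v" using e GN_psd[OF p, of v] by simp
    moreover have "qform ?r v = qform p v + e * qform p v - e * qform q v"
      by (simp add: qform_add qform_scaleR qform_diff algebra_simps)
    ultimately show ?thesis by linarith
  qed
  then have "?r \<in> GN" using p q unfolding GN_iff by simp
  then show "\<exists>e>0. p + e *\<^sub>R (p - q) \<in> GN" using e by blast
qed

lemma core_point_Aut:
  fixes s :: "real^'n^'n \<Rightarrow> real^'n^'n"
  assumes s: "s \<in> Aut" and p: "p \<in> GN" and c: "core_point (s p)"
  shows "core_point p"
  unfolding core_point_def
proof
  fix q :: "real^'n^'n" assume q: "q \<in> GN"
  let ?t = "extGN (inv_into GN s)"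
  have sq: "s q \<in> GN" using Aut_GN[OF s q] .
  obtain e where e: "e > 0" and r: "s p + e *\<^sub>R (s p - s q) \<in> GN"
    using c sq unfolding core_point_def by blast
  let ?r = "s p + e *\<^sub>R (s p - s q)"
  define l where "l = 1 / (1 + e)"
  have l: "l * (1 + e) = 1" "0 \<le> e * l" "e * l \<le> 1" "1 - e * l = l"
    using e by (simp_all add: l_def field_simps)
  have "l *\<^sub>R ?r + (e * l) *\<^sub>R s q = (l * (1 + e)) *\<^sub>R s p"
    by (simp add: algebra_simps)
  then have comb: "l *\<^sub>R ?r + (e * l) *\<^sub>R s q = s p" using l(1) by simp
  have "?t ((1 - e * l) *\<^sub>R ?r + (e * l) *\<^sub>R s q) = (1 - e * l) *\<^sub>R ?t ?r + (e * l) *\<^sub>R ?t (s q)"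
    by (rule Aut_affine[OF Aut_inv_into[OF s], unfolded affine_on_def, rule_format])
      (use r sq l in auto)
  then have "?t (s p) = l *\<^sub>R ?t ?r + (e * l) *\<^sub>R ?t (s q)"
    unfolding l(4) comb .
  then have "p = l *\<^sub>R ?t ?r + (e * l) *\<^sub>R q"
    using Aut_inv_into_cancel(2)[OF s] p q by simp
  then have "(1 + e) *\<^sub>R p = (1 + e) *\<^sub>R (l *\<^sub>R ?t ?r + (e * l) *\<^sub>R q)"
    by (rule arg_cong)
  also have "\<dots> = (l * (1 + e)) *\<^sub>R ?t ?r + (l * (1 + e) * e) *\<^sub>R q"
    by (simp add: algebra_simps)
  also have "\<dots> = ?t ?r + e *\<^sub>R q" using l(1) by simp
  finally have "?t ?r = p + e *\<^sub>R (p - q)" by (simp add: algebra_simps)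
  moreover have "?t ?r \<in> GN" using Aut_GN[OF Aut_inv_into[OF s] r] .
  ultimately show "\<exists>e>0. p + e *\<^sub>R (p - q) \<in> GN" using e by auto
qed

lemma singular_Aut:
  fixes s :: "real^'n^'n \<Rightarrow> real^'n^'n"
  assumes s: "s \<in> Aut" and p: "p \<in> GN" and sp: "singular p"
  shows "singular (s p)"
  using singular_not_core_point[OF sp] core_point_Aut[OF s p] not_singular_core_point[OF Aut_GN[OF s p]]
  by blast

section \<open>Images of the matrices \<open>I + E\<^sub>i\<^sub>j\<close>\<close>

lemma inner_flip: "v \<bullet> flip t y = v \<bullet> y - 2 * v$t * y$t"
proof -
  have "flip t y = y - (2 * y$t) *\<^sub>R unit_vec t"
    by (simp add: vec_eq_iff flip_nth unit_vec_nth)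
  then show ?thesis by (simp add: inner_diff_right inner_unit_vec)
qed

text \<open>Flipping a coordinate \<open>t\<close> with \<open>v\<^sub>t \<noteq> 0\<close> maps the sign vectors in the hyperplane
  \<open>v\<^sup>\<perp>\<close> injectively outside of it.\<close>

lemma signs_hyperplane_half:
  fixes v :: "real^'n"
  assumes vt: "v$t \<noteq> 0" and Z: "Z = {y\<in>signs. v \<bullet> y = 0}"
  shows "2 * card Z \<le> card (signs :: (real^'n) set)"
    and "2 * card Z = card (signs :: (real^'n) set) \<Longrightarrow> y \<in> signs \<Longrightarrow> y \<notin> Z \<Longrightarrow> flip t y \<in> Z"
proof -
  have finZ: "finite Z" using finite_signs Z by auto
  have finB: "finite (signs - Z)" using finite_signs by auto
  have sub: "flip t ` Z \<subseteq> signs - Z"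
  proof
    fix w assume "w \<in> flip t ` Z"
    then obtain y where y: "y \<in> Z" and w: "w = flip t y" by blast
    have yS: "y \<in> signs" and y0: "v \<bullet> y = 0" using y Z by auto
    have "y$t \<noteq> 0" using signs_entry[OF yS, of t] by auto
    then have "v \<bullet> w \<noteq> 0" using vt y0 by (simp add: w inner_flip)
    then show "w \<in> signs - Z" using Z w flip_signs[OF yS] by auto
  qed
  have inj: "inj_on (flip t) Z" by (metis flip_flip inj_onI)
  have c1: "card Z = card (flip t ` Z)" using card_image[OF inj] by simp
  have c2: "card (flip t ` Z) \<le> card (signs - Z)" by (rule card_mono[OF finB sub])
  have c3: "card (signs :: (real^'n) set) = card Z + card (signs - Z)"
    using card_Un_disjoint[OF finZ finB] Z by (simp add: Un_absorb1)
  show "2 * card Z \<le> card (signs :: (real^'n) set)" using c1 c2 c3 by linarith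
  assume eq: "2 * card Z = card (signs :: (real^'n) set)" and y: "y \<in> signs" "y \<notin> Z"
  have "card (flip t ` Z) = card (signs - Z)" using c1 c3 eq by linarith
  then have "flip t ` Z = signs - Z" by (rule card_subset_eq[OF finB sub])
  then show "flip t y \<in> Z" using y flip_flip by (metis DiffI imageE)
qed

lemma half_hyperplane_pair:
  fixes v :: "real^'n"
  assumes Z: "Z = {y\<in>signs. v \<bullet> y = 0}" and eq: "2 * card Z = card (signs :: (real^'n) set)"
    and z: "z \<in> Z" and t: "t1 \<noteq> t2" "v$t1 \<noteq> 0" "v$t2 \<noteq> 0"
  shows "v$t1 * z$t1 + v$t2 * z$t2 = 0"
proof -
  have zS: "z \<in> signs" and z0: "v \<bullet> z = 0" using z Z by auto
  have "z$t2 \<noteq> 0" using signs_entry[OF zS, of t2] by auto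
  then have "flip t2 z \<notin> Z" using t z0 Z by (simp add: inner_flip)
  then have "flip t1 (flip t2 z) \<in> Z"
    using signs_hyperplane_half(2)[OF t(2) Z eq flip_signs[OF zS]] by blast
  then have "v \<bullet> flip t1 (flip t2 z) = 0" using Z by auto
  then show ?thesis using t z0 by (simp add: inner_flip flip_nth)
qed

lemma half_hyperplane_support:
  fixes v :: "real^'n"
  assumes v: "v \<noteq> 0" and Z: "Z = {y\<in>signs. v \<bullet> y = 0}"
    and eq: "2 * card Z = card (signs :: (real^'n) set)" and z: "z \<in> Z"
  obtains i j where "i \<noteq> j" "v$i \<noteq> 0" "v$i * z$i + v$j * z$j = 0" "\<And>u. u \<noteq> i \<Longrightarrow> u \<noteq> j \<Longrightarrow> v$u = 0"
proof -
  obtain i where vi: "v$i \<noteq> 0" using v by (auto simp: vec_eq_iff)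
  have zS: "z \<in> signs" and z0: "v \<bullet> z = 0" using z Z by auto
  have zne: "z$u \<noteq> 0" for u using signs_entry[OF zS, of u] by auto
  note pair = half_hyperplane_pair[OF Z eq z]
  obtain j where ji: "j \<noteq> i" and vj: "v$j \<noteq> 0"
  proof (rule ccontr)
    assume "\<not> thesis"
    then have oth: "\<And>u. u \<noteq> i \<Longrightarrow> v$u = 0" using that by blast
    have "v \<bullet> z = (\<Sum>u\<in>UNIV. if u = i then v$i * z$i else 0)"
      unfolding inner_vec_def by (intro sum.cong) (auto simp: oth)
    then show False using z0 vi zne[of i] by simp
  qed
  have ij: "v$i * z$i + v$j * z$j = 0" using pair[OF ji[symmetric] vi vj] .
  have "v$u = 0" if "u \<noteq> i" "u \<noteq> j" for u
  proof (rule ccontr)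
    assume vu: "v$u \<noteq> 0"
    have "v$i * z$i + v$u * z$u = 0" using pair[of i u] that vi vu by auto
    moreover have "v$j * z$j + v$u * z$u = 0" using pair[of j u] that vj vu by auto
    ultimately have "v$i * z$i = 0" using ij by linarith
    then show False using vi zne[of i] by simp
  qed
  then show ?thesis using ji vi ij by (intro that[of i j]) auto
qed

lemma half_hyperplane_eq_sign_class:
  fixes v :: "real^'n"
  assumes v: "v \<noteq> 0" and Z: "Z = {y\<in>signs. v \<bullet> y = 0}"
    and eq: "2 * card Z = card (signs :: (real^'n) set)"
  obtains a b t where "a \<noteq> b" "t = 1 \<or> t = -1" "Z = sign_class a b t"
proof -
  have "Z \<noteq> {}" using eq card_signs_pos[where 'n='n] by auto
  then obtain z where z: "z \<in> Z" by blast
  have zS: "z \<in> signs" using z Z by auto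
  obtain i j where ij: "i \<noteq> j" and vi: "v$i \<noteq> 0" and vz: "v$i * z$i + v$j * z$j = 0"
    and only: "\<And>u. u \<noteq> i \<Longrightarrow> u \<noteq> j \<Longrightarrow> v$u = 0"
    using half_hyperplane_support[OF v Z eq z] by blast
  have vy: "v \<bullet> y = v$i * y$i + v$j * y$j" for y
  proof -
    have "v \<bullet> y = (\<Sum>u\<in>{i, j}. v$u * y$u)"
      unfolding inner_vec_def inner_real_def by (rule sum.mono_neutral_right) (use only in auto)
    then show ?thesis using ij by simp
  qed
  have vj: "v$j = - (v$i * z$i * z$j)"
  proof -
    have "v$j = v$j * (z$j * z$j)" using signs_entry_sq[OF zS, of j] by simp
    also have "\<dots> = (v$j * z$j) * z$j" by (simp add: mult_ac)
    also have "v$j * z$j = - (v$i * z$i)" using vz by linarith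
    finally show ?thesis by simp
  qed
  have "v \<bullet> y = 0 \<longleftrightarrow> y$i * y$j = z$i * z$j" if yS: "y \<in> signs" for y
  proof -
    have "v \<bullet> y = v$i * (y$i - z$i * z$j * y$j)" unfolding vy vj by (simp add: algebra_simps)
    then have "v \<bullet> y = 0 \<longleftrightarrow> y$i = z$i * z$j * y$j" using vi by simp
    also have "\<dots> \<longleftrightarrow> y$i * y$j = z$i * z$j"
    proof
      assume "y$i = z$i * z$j * y$j"
      then show "y$i * y$j = z$i * z$j" using signs_entry_sq[OF yS, of j] by (simp add: mult_ac)
    next
      assume h: "y$i * y$j = z$i * z$j"
      have "y$i = (y$i * y$j) * y$j" using signs_entry_sq[OF yS, of j] by (simp add: mult_ac)
      then show "y$i = z$i * z$j * y$j" using h by simp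
    qed
    finally show ?thesis .
  qed
  then have "Z = sign_class i j (z$i * z$j)" using Z by (auto simp: sign_class_def)
  then show ?thesis by (rule that[OF ij signs_entry_prod[OF zS]])
qed

lemma singular_mat1_plus_sym_unit:
  assumes ij: "i \<noteq> j"
  shows "singular (mat 1 + sym_unit i j)"
proof -
  define v where "v = (\<chi> u. if u = i then 1 else if u = j then -1 else (0::real))"
  have vv: "v$i = 1" "v$j = -1" using ij by (auto simp: v_def)
  then have "v \<noteq> 0" by (metis zero_index zero_neq_one)
  moreover have "qform (mat 1 + sym_unit i j) v = 0"
    using qform_two_supp[OF ij, of v] ij unfolding vv by (simp add: v_def sym_unit_def mat_def)
  ultimately show ?thesis unfolding singular_def by blast
qed

lemma mat1_plus_sym_unit_GN:
  assumes ij: "i \<noteq> j"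
  shows "mat 1 + sym_unit i j \<in> (GN :: (real^'n^'n) set)"
  using cut_avg_GN[OF sign_class_subset sign_class_nonempty[OF ij, of 1]] cut_avg_sign_class[OF ij, of 1]
  by simp

lemma singular_cut_avg_orthogonal:
  assumes S: "S \<subseteq> signs" "S \<noteq> {}" and sing: "singular (cut_avg S)"
  obtains v where "v \<noteq> 0" "\<And>y. y \<in> S \<Longrightarrow> v \<bullet> y = 0"
proof -
  obtain v where v: "v \<noteq> 0" and qv: "qform (cut_avg S) v = 0"
    using sing unfolding singular_def by blast
  have fin: "finite S" using S finite_signs finite_subset by blast
  then have "card S > 0" using S by (simp add: card_gt_0_iff)
  then have "(\<Sum>y\<in>S. (y \<bullet> v) * (y \<bullet> v)) = 0" using qv by (simp add: qform_cut_avg)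
  then have "\<forall>y\<in>S. (y \<bullet> v) * (y \<bullet> v) = 0" using fin by (simp add: sum_nonneg_eq_0_iff)
  then show ?thesis using that v by (simp add: inner_commute)
qed

lemma Aut_mat1_plus_sym_unit:
  fixes s :: "real^'n^'n \<Rightarrow> real^'n^'n"
  assumes s: "s \<in> Aut" and ij: "i \<noteq> j"
  obtains a b t where "a \<noteq> b" "t = 1 \<or> t = -1" "s (mat 1 + sym_unit i j) = mat 1 + t *\<^sub>R sym_unit a b"
proof -
  let ?A = "sign_class i j 1" and ?B = "cut_map s ` sign_class i j 1"
  have A: "?A \<subseteq> signs" "?A \<noteq> {}" using sign_class_subset sign_class_nonempty[OF ij] by auto
  have pA: "cut_avg ?A = mat 1 + sym_unit i j" using cut_avg_sign_class[OF ij, of 1] by simp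
  have sB: "s (cut_avg ?A) = cut_avg ?B" by (rule Aut_cut_avg_cut_map[OF s A])
  have cB: "card ?B = card ?A"
    by (rule card_image[OF inj_on_subset[OF inj_on_cut_map[OF s] A(1)]])
  have B: "?B \<subseteq> signs" "?B \<noteq> {}" using cut_map(1)[OF s] A by auto
  have "singular (cut_avg ?B)"
    using singular_Aut[OF s cut_avg_GN[OF A] singular_mat1_plus_sym_unit[OF ij, folded pA]] sB by simp
  then obtain v where v: "v \<noteq> 0" and B0: "\<And>y. y \<in> ?B \<Longrightarrow> v \<bullet> y = 0"
    using singular_cut_avg_orthogonal[OF B] by blast
  define Z where "Z = {y\<in>signs. v \<bullet> y = 0}"
  have BZ: "?B \<subseteq> Z" using B(1) B0 by (auto simp: Z_def)
  have finZ: "finite Z" using finite_signs unfolding Z_def by (rule finite_subset[rotated]) auto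
  obtain t0 where "v$t0 \<noteq> 0" using v by (auto simp: vec_eq_iff)
  then have "2 * card Z \<le> card (signs :: (real^'n) set)" by (rule signs_hyperplane_half(1)[OF _ Z_def])
  moreover have "card ?B \<le> card Z" by (rule card_mono[OF finZ BZ])
  ultimately have eqZ: "2 * card Z = card (signs :: (real^'n) set)" "card ?B = card Z"
    using cB card_sign_class[OF ij, of 1] by linarith+
  obtain a b t where ab: "a \<noteq> b" "t = 1 \<or> t = -1" "Z = sign_class a b t"
    using half_hyperplane_eq_sign_class[OF v Z_def eqZ(1)] by blast
  have "?B = Z" by (rule card_subset_eq[OF finZ BZ eqZ(2)])
  then show ?thesis
    by (intro that[OF ab(1,2)]) (use sB pA cut_avg_sign_class[OF ab(1) ab(2)] ab(3) in simp)
qed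

lemma lin_part_sym_unit:
  fixes s :: "real^'n^'n \<Rightarrow> real^'n^'n"
  assumes s: "s \<in> Aut" and ij: "i \<noteq> j"
  obtains a b t where "a \<noteq> b" "t = 1 \<or> t = -1" "lin_part s (sym_unit i j) = t *\<^sub>R sym_unit a b"
proof -
  obtain a b t where ab: "a \<noteq> b" "t = 1 \<or> t = -1"
    and st: "s (mat 1 + sym_unit i j) = mat 1 + t *\<^sub>R sym_unit a b"
    by (rule Aut_mat1_plus_sym_unit[OF s ij])
  show ?thesis
    by (rule that[OF ab]) (use lin_part_Aut[OF s mat1_plus_sym_unit_GN[OF ij]] st in simp)
qed

section \<open>The linear part of an automorphism is an isometry\<close>

lemma inner_mat_eq_sum: "(X :: real^'n^'n) \<bullet> Y = (\<Sum>u\<in>UNIV. \<Sum>w\<in>UNIV. X$u$w * Y$u$w)"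
  by (simp add: inner_vec_def inner_real_def)

lemma inner_dyad: "dyad a b \<bullet> dyad c d = (a \<bullet> c) * (b \<bullet> d)"
proof -
  have "dyad a b \<bullet> dyad c d = (\<Sum>u\<in>UNIV. (a$u * c$u) * (\<Sum>w\<in>UNIV. b$w * d$w))"
    unfolding inner_mat_eq_sum dyad_def sum_distrib_left by (intro sum.cong refl) (simp add: mult_ac)
  also have "\<dots> = (a \<bullet> c) * (b \<bullet> d)"
    by (simp only: sum_distrib_right[symmetric] inner_vec_def inner_real_def)
  finally show ?thesis .
qed

lemma sym_unit_eq_dyad:
  "i \<noteq> j \<Longrightarrow> sym_unit i j = dyad (unit_vec i) (unit_vec j) + dyad (unit_vec j) (unit_vec i)"
  by (auto simp: vec_eq_iff sym_unit_def dyad_def unit_vec_nth)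

lemma sym_unit_commute: "sym_unit j i = sym_unit i j"
  by (auto simp: sym_unit_def vec_eq_iff)

lemma sym_unit_nth: "i \<noteq> j \<Longrightarrow> sym_unit i j $ i $ j = 1"
  by (simp add: sym_unit_def)

lemma hollow_sym_unit: "i \<noteq> j \<Longrightarrow> hollow (sym_unit i j)"
  unfolding hollow_def sym_unit_def by auto

lemma inner_sym_unit:
  assumes "i \<noteq> j" "k \<noteq> l"
  shows "sym_unit i j \<bullet> sym_unit k l = (if (k = i \<and> l = j) \<or> (k = j \<and> l = i) then 2 else 0)"
  using assms unfolding sym_unit_eq_dyad[OF assms(1)] sym_unit_eq_dyad[OF assms(2)]
  by (auto simp: inner_add_left inner_add_right inner_dyad inner_unit_vec unit_vec_nth)

lemma inner_outer:
  fixes x y :: "real^'n"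
  shows "outer x \<bullet> outer y = (x \<bullet> y) * (x \<bullet> y)"
proof -
  have "outer x = dyad x x" for x :: "real^'n" by (simp add: outer_def dyad_def)
  then show ?thesis by (simp add: inner_dyad)
qed

definition offdiag :: "real^'n^'n \<Rightarrow> 'n \<Rightarrow> 'n \<Rightarrow> real" where
  "offdiag X i j = (if i = j then 0 else X$i$j)"

lemma sum_sum_delta:
  fixes f :: "'n::finite \<Rightarrow> 'n \<Rightarrow> real"
  shows "(\<Sum>i\<in>UNIV. \<Sum>j\<in>UNIV. if i = a \<and> j = b then f i j else 0) = f a b"
proof -
  have "(\<Sum>i\<in>UNIV. \<Sum>j\<in>UNIV. if i = a \<and> j = b then f i j else 0) =
        (\<Sum>i\<in>UNIV. if i = a then (\<Sum>j\<in>UNIV. if j = b then f i j else 0) else 0)"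
    by (intro sum.cong) auto
  then show ?thesis by simp
qed

lemma hollow_eq_sum_sym_unit:
  assumes H: "hollow X"
  shows "X = (1/2) *\<^sub>R (\<Sum>i\<in>UNIV. \<Sum>j\<in>UNIV. offdiag X i j *\<^sub>R sym_unit i j)"
proof -
  have "(\<Sum>i\<in>UNIV. \<Sum>j\<in>UNIV. offdiag X i j * sym_unit i j $ u $ w) = 2 * X$u$w" for u w
  proof (cases "u = w")
    case True
    have "\<And>i j. offdiag X i j * sym_unit i j $ u $ w = 0" by (auto simp: sym_unit_def offdiag_def True)
    then have "(\<Sum>i\<in>UNIV. \<Sum>j\<in>UNIV. offdiag X i j * sym_unit i j $ u $ w) = 0"
      by (simp only: sum.neutral_const)
    then show ?thesis using H True by (simp add: hollow_def)
  next
    case False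
    have "(\<Sum>i\<in>UNIV. \<Sum>j\<in>UNIV. offdiag X i j * sym_unit i j $ u $ w) =
      (\<Sum>i\<in>UNIV. \<Sum>j\<in>UNIV. (if i = u \<and> j = w then X$i$j else 0) + (if i = w \<and> j = u then X$i$j else 0))"
      by (intro sum.cong refl) (auto simp: sym_unit_def offdiag_def False)
    also have "\<dots> = X$u$w + X$w$u"
      by (simp only: sum.distrib sum_sum_delta)
    finally show ?thesis using H by (simp add: hollow_def)
  qed
  then show ?thesis by (simp add: vec_eq_iff sum_component)
qed

lemma linear_hollow_expand:
  fixes F :: "real^'n^'n \<Rightarrow> 'b::real_vector"
  assumes F: "linear F" and H: "hollow X"
  shows "F X = (1/2) *\<^sub>R (\<Sum>i\<in>UNIV. \<Sum>j\<in>UNIV. offdiag X i j *\<^sub>R F (sym_unit i j))"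
proof -
  have "F X = F ((1/2) *\<^sub>R (\<Sum>i\<in>UNIV. \<Sum>j\<in>UNIV. offdiag X i j *\<^sub>R sym_unit i j))"
    using hollow_eq_sum_sym_unit[OF H] by simp
  also have "\<dots> = (1/2) *\<^sub>R (\<Sum>i\<in>UNIV. \<Sum>j\<in>UNIV. offdiag X i j *\<^sub>R F (sym_unit i j))"
    using F by (simp add: linear_scale linear_sum)
  finally show ?thesis .
qed

lemma inner_linear_hollow_expand:
  fixes F :: "real^'n^'n \<Rightarrow> real^'n^'n"
  assumes F: "linear F" and X: "hollow X" and Y: "hollow Y"
  shows "F X \<bullet> F Y = (1/2) * (\<Sum>i\<in>UNIV. \<Sum>j\<in>UNIV. offdiag Y i j *
      ((1/2) * (\<Sum>k\<in>UNIV. \<Sum>l\<in>UNIV. offdiag X k l * (F (sym_unit k l) \<bullet> F (sym_unit i j)))))"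
  unfolding linear_hollow_expand[OF F X] linear_hollow_expand[OF F Y]
  by (simp only: inner_scaleR_left inner_scaleR_right inner_sum_left inner_sum_right)

lemma lin_part_sym_unit_not_proportional:
  fixes s :: "real^'n^'n \<Rightarrow> real^'n^'n"
  assumes s: "s \<in> Aut" and ij: "i \<noteq> j" and kl: "k \<noteq> l"
    and ne: "\<not> ((k = i \<and> l = j) \<or> (k = j \<and> l = i))"
  shows "lin_part s (sym_unit k l) \<noteq> c *\<^sub>R lin_part s (sym_unit i j)"
proof
  assume e: "lin_part s (sym_unit k l) = c *\<^sub>R lin_part s (sym_unit i j)"
  have "lin_part s (sym_unit k l - c *\<^sub>R sym_unit i j) = 0"
    using e linear_lin_part[OF Aut_affine[OF s]] by (simp add: linear_diff linear_scale)
  moreover have "hollow (sym_unit k l - c *\<^sub>R sym_unit i j)"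
    using hollow_sym_unit[OF ij] hollow_sym_unit[OF kl] by (simp add: hollow_diff hollow_scaleR)
  ultimately have "sym_unit k l - c *\<^sub>R sym_unit i j = 0"
    using lin_part_eq_0_imp[OF Aut_affine[OF s] Aut_inj_on[OF s]] by blast
  then have "(sym_unit k l - c *\<^sub>R sym_unit i j) $ k $ l = 0" by simp
  then show False using ne sym_unit_nth[OF kl] by (auto simp: sym_unit_def)
qed

lemma lin_part_inner_sym_unit:
  fixes s :: "real^'n^'n \<Rightarrow> real^'n^'n"
  assumes s: "s \<in> Aut" and ij: "i \<noteq> j" and kl: "k \<noteq> l"
  shows "lin_part s (sym_unit k l) \<bullet> lin_part s (sym_unit i j) = sym_unit k l \<bullet> sym_unit i j"
proof -
  obtain a b t where ab: "a \<noteq> b" "t = 1 \<or> t = -1" "lin_part s (sym_unit i j) = t *\<^sub>R sym_unit a b"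
    by (rule lin_part_sym_unit[OF s ij])
  obtain c d t' where cd: "c \<noteq> d" "t' = 1 \<or> t' = -1" "lin_part s (sym_unit k l) = t' *\<^sub>R sym_unit c d"
    by (rule lin_part_sym_unit[OF s kl])
  show ?thesis
  proof (cases "(k = i \<and> l = j) \<or> (k = j \<and> l = i)")
    case True
    then have "sym_unit k l = sym_unit i j" using sym_unit_commute by blast
    then show ?thesis
      using ab inner_sym_unit[OF ab(1) ab(1)] inner_sym_unit[OF ij ij] by auto
  next
    case False
    have "\<not> ((c = a \<and> d = b) \<or> (c = b \<and> d = a))"
    proof
      assume "(c = a \<and> d = b) \<or> (c = b \<and> d = a)"
      then have "sym_unit c d = sym_unit a b" using sym_unit_commute by blast
      then have "lin_part s (sym_unit k l) = (t' * t) *\<^sub>R lin_part s (sym_unit i j)"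
        using ab(2,3) cd(3) by auto
      then show False using lin_part_sym_unit_not_proportional[OF s ij kl False] by blast
    qed
    then show ?thesis
      using False ab(3) cd(3) inner_sym_unit[OF cd(1) ab(1)] inner_sym_unit[OF kl ij] by auto
  qed
qed

lemma lin_part_isometry:
  fixes s :: "real^'n^'n \<Rightarrow> real^'n^'n"
  assumes s: "s \<in> Aut" and X: "hollow X" and Y: "hollow Y"
  shows "lin_part s X \<bullet> lin_part s Y = X \<bullet> Y"
proof -
  let ?L = "lin_part s"
  have lin: "linear ?L" by (rule linear_lin_part[OF Aut_affine[OF s]])
  have summand: "offdiag X k l * (?L (sym_unit k l) \<bullet> ?L (sym_unit i j)) =
      offdiag X k l * (sym_unit k l \<bullet> sym_unit i j)" if "i \<noteq> j" for i j k l
    using lin_part_inner_sym_unit[OF s that, of k l] by (cases "k = l") (auto simp: offdiag_def)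
  have "offdiag Y i j * ((1/2) * (\<Sum>k\<in>UNIV. \<Sum>l\<in>UNIV. offdiag X k l * (?L (sym_unit k l) \<bullet> ?L (sym_unit i j)))) =
        offdiag Y i j * ((1/2) * (\<Sum>k\<in>UNIV. \<Sum>l\<in>UNIV. offdiag X k l * (sym_unit k l \<bullet> sym_unit i j)))"
    for i j
  proof (cases "i = j")
    case False then show ?thesis by (simp only: summand[OF False])
  qed (simp add: offdiag_def)
  then have "?L X \<bullet> ?L Y = id X \<bullet> id Y"
    unfolding inner_linear_hollow_expand[OF lin X Y] inner_linear_hollow_expand[OF linear_id X Y]
    by (simp only: id_apply)
  then show ?thesis by simp
qed

section \<open>Automorphisms fixing the all-ones cut\<close>

lemma inner_ones: "y \<bullet> ones = (\<Sum>u\<in>UNIV. y$u)"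
  by (simp add: inner_vec_def ones_def)

lemma inner_ones_self: "ones \<bullet> (ones :: real^'n) = real CARD('n)"
  by (simp add: inner_vec_def ones_def)

lemma signs_inner_self: "y \<in> signs \<Longrightarrow> y \<bullet> y = real CARD('n)"
  for y :: "real^'n" by (simp add: inner_vec_def signs_entry_sq)

lemma inner_flip_ones: "flip i ones \<bullet> (ones :: real^'n) = real CARD('n) - 2"
proof -
  have "flip i ones \<bullet> (ones :: real^'n) = (\<Sum>u\<in>UNIV. 1 - (if u = i then 2 else 0))"
    unfolding inner_ones by (intro sum.cong) (auto simp: flip_nth ones_def)
  also have "\<dots> = real CARD('n) - 2" by (simp add: sum_subtractf)
  finally show ?thesis .
qed

lemma inner_outer_minus_outer_ones:
  fixes x :: "real^'n"
  assumes x: "x \<in> signs"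
  shows "(outer x - outer ones) \<bullet> (outer x - outer ones) =
    2 * (real CARD('n) * real CARD('n)) - 2 * ((x \<bullet> ones) * (x \<bullet> ones))"
  using signs_inner_self[OF x] inner_ones_self[where 'n='n]
  by (simp add: inner_diff_left inner_diff_right inner_outer inner_commute)

text \<open>The linear part is an isometry and \<open>\<parallel>x x\<^sup>T - 1 1\<^sup>T\<parallel>\<^sup>2 = 2 N\<^sup>2 - 2 (x \<bullet> 1)\<^sup>2\<close>.\<close>

lemma Aut_fixing_ones_inner_ones:
  fixes s :: "real^'n^'n \<Rightarrow> real^'n^'n"
  assumes s: "s \<in> Aut" and sJ: "s (outer ones) = outer ones"
    and x: "x \<in> signs" and y: "y \<in> signs" and sx: "s (outer x) = outer y"
  shows "(y \<bullet> ones) * (y \<bullet> ones) = (x \<bullet> ones) * (x \<bullet> ones)"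
proof -
  let ?J = "outer (ones :: real^'n)"
  have G: "outer x \<in> GN" "?J \<in> GN" using outer_GN x ones_signs by blast+
  have X: "outer x - ?J = (outer x - mat 1) - (?J - mat 1)" by simp
  have H: "hollow (outer x - ?J)"
    unfolding X by (intro hollow_diff GN_minus_mat1_hollow G)
  have "lin_part s (outer x - ?J) = outer y - ?J"
    using affine_diff_eq_lin_part[OF Aut_affine[OF s] G] sx sJ by simp
  then have "(outer y - ?J) \<bullet> (outer y - ?J) = (outer x - ?J) \<bullet> (outer x - ?J)"
    using lin_part_isometry[OF s H H] by simp
  then show ?thesis unfolding inner_outer_minus_outer_ones[OF x] inner_outer_minus_outer_ones[OF y]
    by simp
qed

lemma signs_inner_ones_eq_flip:
  fixes y :: "real^'n"
  assumes y: "y \<in> signs" and y1: "y \<bullet> ones = real CARD('n) - 2"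
  obtains r where "y = flip r ones"
proof -
  define R where "R = {u. y$u = -1}"
  have "(\<Sum>u\<in>UNIV. 1 - y$u) = real CARD('n) - y \<bullet> ones" by (simp add: sum_subtractf inner_ones)
  also have "(\<Sum>u\<in>UNIV. 1 - y$u) = (\<Sum>u\<in>UNIV. if u \<in> R then 2 else 0)"
    by (intro sum.cong refl) (use signs_entry[OF y] in \<open>auto simp: R_def\<close>)
  also have "\<dots> = 2 * real (card R)" by (simp add: sum.If_cases)
  finally have "card R = 1" using y1 by simp
  then obtain r where R: "R = {r}" by (rule card_1_singletonE)
  have "y$u = flip r ones $ u" for u
    using R signs_entry[OF y, of u] by (cases "u = r") (auto simp: R_def flip_nth ones_def)
  then have "y = flip r ones" by (simp add: vec_eq_iff)
  then show ?thesis by (rule that)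
qed

lemma Aut_fixing_ones_flip:
  fixes s :: "real^'n^'n \<Rightarrow> real^'n^'n"
  assumes s: "s \<in> Aut" and sJ: "s (outer ones) = outer ones"
  shows "\<exists>r. s (outer (flip i ones)) = outer (flip r ones)"
proof -
  let ?x = "flip i (ones :: real^'n)"
  have x: "?x \<in> signs" by (rule flip_signs[OF ones_signs])
  define y where "y = cut_map s ?x"
  have y: "y \<in> signs" and sx: "s (outer ?x) = outer y" using cut_map[OF s x] by (auto simp: y_def)
  have "(y \<bullet> ones) * (y \<bullet> ones) = (?x \<bullet> ones) * (?x \<bullet> ones)"
    by (rule Aut_fixing_ones_inner_ones[OF s sJ x y sx])
  then consider "y \<bullet> ones = real CARD('n) - 2" | "(- y) \<bullet> ones = real CARD('n) - 2"
    unfolding inner_flip_ones by (auto simp: square_eq_iff)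
  then show ?thesis
  proof cases
    case 1
    then obtain r where "y = flip r ones" by (rule signs_inner_ones_eq_flip[OF y])
    then show ?thesis using sx by blast
  next
    case 2
    then obtain r where "- y = flip r ones" by (rule signs_inner_ones_eq_flip[OF signs_uminus[OF y]])
    then show ?thesis using sx outer_uminus[of y] by metis
  qed
qed

definition flip_index :: "(real^'n^'n \<Rightarrow> real^'n^'n) \<Rightarrow> 'n \<Rightarrow> 'n" where
  "flip_index s i = (SOME r. s (outer (flip i ones)) = outer (flip r ones))"

lemma flip_index:
  fixes s :: "real^'n^'n \<Rightarrow> real^'n^'n"
  assumes s: "s \<in> Aut" and sJ: "s (outer ones) = outer ones"
  shows "s (outer (flip i ones)) = outer (flip (flip_index s i) ones)"
  unfolding flip_index_def using Aut_fixing_ones_flip[OF s sJ, of i] by (rule someI_ex)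

lemma exists_third:
  assumes "CARD('n) \<ge> 3"
  obtains k :: 'n where "k \<noteq> i" "k \<noteq> j"
proof -
  have "card {i, j} \<le> 2" by (simp add: card_insert_if)
  moreover have "card (UNIV - {i, j}) = CARD('n) - card {i, j}" by (rule card_Diff_subset) auto
  ultimately have "card (UNIV - {i, j}) > 0" using assms by linarith
  then have "UNIV - {i, j} \<noteq> {}" by (simp only: card_gt_0_iff) blast
  then show ?thesis using that by blast
qed

lemma inj_flip_index:
  fixes s :: "real^'n^'n \<Rightarrow> real^'n^'n"
  assumes s: "s \<in> Aut" and sJ: "s (outer ones) = outer ones" and N: "CARD('n) \<ge> 3"
  shows "inj (flip_index s)"
proof (rule injI, rule ccontr)
  fix i j assume e: "flip_index s i = flip_index s j" and ij: "i \<noteq> j"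
  have "outer (flip i ones) \<in> GN" "outer (flip j ones) \<in> GN"
    using outer_GN flip_signs ones_signs by blast+
  moreover have "s (outer (flip i ones)) = s (outer (flip j ones))"
    using flip_index[OF s sJ, of i] flip_index[OF s sJ, of j] e by simp
  ultimately have "outer (flip i ones) = outer (flip j (ones :: real^'n))"
    using Aut_inj_on[OF s] by (meson inj_onD)
  then have "flip j ones = flip i ones \<or> flip j ones = - flip i (ones :: real^'n)"
    by (intro outer_eq_outerD) (auto intro: flip_signs ones_signs)
  moreover obtain k where k: "k \<noteq> i" "k \<noteq> j" by (rule exists_third[OF N])
  moreover have "flip j ones $ i \<noteq> flip i (ones :: real^'n) $ i" using ij by (simp add: flip_nth ones_def)
  moreover have "flip j ones $ k \<noteq> - flip i (ones :: real^'n) $ k" using k by (simp add: flip_nth ones_def)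
  ultimately show False by auto
qed

text \<open>\<open>E\<^sub>i\<^sub>j\<close> is a signed combination of four cuts whose images under \<open>s\<close> are known up to
  the last one; evaluating its image at the entry \<open>(\<rho> i, \<rho> j)\<close> pins down \<open>s\<close> on \<open>E\<^sub>i\<^sub>j\<close>.\<close>

lemma four_cuts_eq_sym_unit:
  assumes "i \<noteq> j"
  shows "4 *\<^sub>R sym_unit i j =
    outer ones - outer (flip i ones) - outer (flip j ones) + outer (flip i (flip j (ones :: real^'n)))"
  using assms by (auto simp: vec_eq_iff sym_unit_def outer_def flip_nth ones_def)

lemma lin_part_sym_unit_flip_index:
  fixes s :: "real^'n^'n \<Rightarrow> real^'n^'n"
  assumes s: "s \<in> Aut" and sJ: "s (outer ones) = outer ones" and N: "CARD('n) \<ge> 3"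
    and ij: "i \<noteq> j"
  shows "lin_part s (sym_unit i j) = sym_unit (flip_index s i) (flip_index s j)"
proof -
  let ?r = "flip_index s i" and ?r' = "flip_index s j"
  let ?xij = "flip i (flip j (ones :: real^'n))"
  have rr: "?r \<noteq> ?r'" using inj_flip_index[OF s sJ N] ij by (meson injD)
  have lin: "linear (lin_part s)" by (rule linear_lin_part[OF Aut_affine[OF s]])
  obtain a b t where ab: "a \<noteq> b" "t = 1 \<or> t = -1" "lin_part s (sym_unit i j) = t *\<^sub>R sym_unit a b"
    by (rule lin_part_sym_unit[OF s ij])
  have x: "?xij \<in> signs" using flip_signs ones_signs by blast
  define y where "y = cut_map s ?xij"
  have y: "y \<in> signs" and sy: "s (outer ?xij) = outer y" using cut_map[OF s x] by (auto simp: y_def)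
  have L: "lin_part s (outer x - mat 1) = s (outer x) - mat 1" if "x \<in> signs" for x
    using lin_part_Aut[OF s outer_GN[OF that]] .
  have "(4 * t) *\<^sub>R sym_unit a b = lin_part s (4 *\<^sub>R sym_unit i j)"
    using ab(3) lin by (simp add: linear_scale)
  also have "4 *\<^sub>R sym_unit i j = (outer ones - mat 1) - (outer (flip i ones) - mat 1)
      - (outer (flip j ones) - mat 1) + (outer ?xij - mat 1)"
    using four_cuts_eq_sym_unit[OF ij] by simp
  also have "lin_part s \<dots> = lin_part s (outer ones - mat 1) - lin_part s (outer (flip i ones) - mat 1)
      - lin_part s (outer (flip j ones) - mat 1) + lin_part s (outer ?xij - mat 1)"
    using lin by (simp add: linear_diff linear_add)
  also have "\<dots> = outer ones - outer (flip ?r ones) - outer (flip ?r' ones) + outer y"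
    unfolding L[OF ones_signs] L[OF flip_signs[OF ones_signs]] L[OF x] sJ flip_index[OF s sJ] sy
    by simp
  finally have "4 * t * sym_unit a b $ ?r $ ?r' = 3 + y$?r * y$?r'"
    using rr by (simp add: outer_def flip_nth ones_def vec_eq_iff)
  moreover have "y$?r * y$?r' = 1 \<or> y$?r * y$?r' = -1" by (rule signs_entry_prod[OF y])
  ultimately have "(?r = a \<and> ?r' = b) \<or> (?r = b \<and> ?r' = a)" and "t = 1"
    using ab(2) by (auto simp: sym_unit_def split: if_splits)
  then show ?thesis using ab(3) sym_unit_commute by auto
qed

lemma lin_part_sym_unit_card_le_2:
  fixes s :: "real^'n^'n \<Rightarrow> real^'n^'n"
  assumes s: "s \<in> Aut" and sJ: "s (outer ones) = outer ones" and N: "CARD('n) \<le> 2"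
    and ij: "i \<noteq> j"
  shows "lin_part s (sym_unit i j) = sym_unit i j"
proof -
  have "{i, j} = (UNIV :: 'n set)"
    using ij N card_mono[of UNIV "{i, j}"] by (intro card_subset_eq) auto
  then have all: "u = i \<or> u = j" for u by blast
  have "(outer ones - mat 1) $ u $ w = sym_unit i j $ u $ w" for u w
    using all[of u] all[of w] ij by (auto simp: outer_def ones_def mat_def sym_unit_def)
  then have "outer ones - mat 1 = sym_unit i j" by (simp add: vec_eq_iff)
  then show ?thesis using lin_part_Aut[OF s outer_GN[OF ones_signs]] sJ by simp
qed

lemma linear_perm_conj: "linear (perm_conj p)"
  by (rule linearI) (simp_all add: perm_conj_def vec_eq_iff)

lemma perm_conj_sym_unit:
  assumes p: "p permutes UNIV"
  shows "perm_conj (inv p) (sym_unit i j) = sym_unit (p i) (p j)"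
proof -
  have "inv p u = i \<longleftrightarrow> u = p i" for u i using p by (metis permutes_inverses)
  then show ?thesis by (simp add: perm_conj_def sym_unit_def vec_eq_iff)
qed

lemma perm_conj_mat1:
  assumes p: "p permutes UNIV"
  shows "perm_conj p (mat 1) = mat 1"
  using permutes_inj[OF p] by (auto simp: perm_conj_def mat_def vec_eq_iff inj_eq)

lemma Aut_fixing_ones_sym_unit:
  fixes s :: "real^'n^'n \<Rightarrow> real^'n^'n"
  assumes s: "s \<in> Aut" and sJ: "s (outer ones) = outer ones"
  obtains p where "p permutes UNIV"
    "\<And>i j. i \<noteq> j \<Longrightarrow> lin_part s (sym_unit i j) = sym_unit (p i) (p j)"
proof (cases "CARD('n) \<ge> 3")
  case True
  have "inj (flip_index s)" by (rule inj_flip_index[OF s sJ True])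
  then have "bij (flip_index s)" using finite_UNIV_inj_surj[of "flip_index s"] by (simp add: bij_def)
  then have "flip_index s permutes UNIV" by (rule bij_imp_permutes) simp
  then show thesis by (rule that) (rule lin_part_sym_unit_flip_index[OF s sJ True])
next
  case False
  then show thesis by (intro that[of id]) (simp_all add: permutes_id lin_part_sym_unit_card_le_2[OF s sJ])
qed

lemma Aut_fixing_ones_eq_perm_conj:
  fixes s :: "real^'n^'n \<Rightarrow> real^'n^'n"
  assumes s: "s \<in> Aut" and sJ: "s (outer ones) = outer ones"
  obtains p where "p permutes UNIV" "\<And>G. G \<in> GN \<Longrightarrow> s G = perm_conj (inv p) G"
proof -
  obtain p where p: "p permutes UNIV"
    and pE: "\<And>i j. i \<noteq> j \<Longrightarrow> lin_part s (sym_unit i j) = sym_unit (p i) (p j)"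
    using Aut_fixing_ones_sym_unit[OF s sJ] by blast
  have lin: "linear (lin_part s)" by (rule linear_lin_part[OF Aut_affine[OF s]])
  have linM: "linear (perm_conj (inv p))" by (rule linear_perm_conj)
  have "offdiag X i j *\<^sub>R lin_part s (sym_unit i j) = offdiag X i j *\<^sub>R perm_conj (inv p) (sym_unit i j)"
    for X i j
    using pE[of i j] perm_conj_sym_unit[OF p, of i j] by (cases "i = j") (simp_all add: offdiag_def)
  then have L: "lin_part s X = perm_conj (inv p) X" if "hollow X" for X
    unfolding linear_hollow_expand[OF lin that] linear_hollow_expand[OF linM that]
    by (simp only:)
  have "s G = perm_conj (inv p) G" if G: "G \<in> GN" for G
  proof -
    have "s G = mat 1 + perm_conj (inv p) (G - mat 1)"
      using lin_part_Aut[OF s G] L[OF GN_minus_mat1_hollow[OF G]] by simp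
    then show ?thesis
      using linear_diff[OF linM] perm_conj_mat1[OF permutes_inv[OF p]] by simp
  qed
  then show ?thesis by (rule that[OF p])
qed

lemma Aut_sign_normalise:
  fixes s :: "real^'n^'n \<Rightarrow> real^'n^'n"
  assumes s: "s \<in> Aut"
  obtains T where "(extGN (RMap T) \<circ> s) (outer ones) = outer ones"
proof -
  define y where "y = cut_map s ones"
  have y: "y \<in> signs" and sJ: "s (outer ones) = outer y"
    using cut_map[OF s ones_signs] by (auto simp: y_def)
  define T where "T = {a. y$a = -1}"
  define sg where "sg = (\<lambda>u. if u \<in> T then -1 else (1::real))"
  have sign: "sg u * y$u = 1" for u
    using signs_entry[OF y, of u] by (auto simp: sg_def T_def)
  have "(extGN (RMap T) \<circ> s) (outer ones) = sign_conj sg (outer y)"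
    using outer_GN[OF y] sJ by (simp add: extGN_def RMap_eq_sign_conj sg_def)
  also have "\<dots> = outer ones"
  proof -
    have "sg u * (y$u * y$w) * sg w = (sg u * y$u) * (sg w * y$w)" for u w by (simp add: mult_ac)
    then show ?thesis using sign by (simp add: sign_conj_def outer_def ones_def vec_eq_iff)
  qed
  finally show ?thesis by (rule that)
qed

lemma Aut_in_Sym:
  fixes s :: "real^'n^'n \<Rightarrow> real^'n^'n"
  assumes s: "s \<in> Aut" and p: "p permutes UNIV"
    and sG: "\<And>G. G \<in> GN \<Longrightarrow> extGN (RMap T) (s G) = perm_conj (inv p) G"
  shows "s \<in> Sym"
proof -
  have pi: "inv p permutes UNIV" using p by (rule permutes_inv)
  have "s G = extGN (RMap T) (extGN (PiMap (inv p)) G)" for G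
  proof (cases "G \<in> GN")
    case True
    have "s G = RMap T (RMap T (s G))"
      using RMap_eq_sign_conj[of T] sign_conj_involution[of "\<lambda>u. if u \<in> T then -1 else 1"] by simp
    also have "RMap T (s G) = perm_conj (inv p) G"
      using sG[OF True] Aut_GN[OF s True] by (simp add: extGN_def)
    finally show ?thesis
      using True perm_conj_GN[OF pi True] by (simp add: extGN_def PiMap_eq_perm_conj[OF pi])
  next
    case False
    then show ?thesis using s by (simp add: Aut_def extGN_def)
  qed
  then have "s = extGN (RMap T) \<circ> (extGN (PiMap (inv p)) \<circ> (\<lambda>G. G))" by auto
  also have "\<dots> \<in> Sym" by (intro Sym_R Sym_Pi Sym_id pi)
  finally show ?thesis .
qed

theorem theorem4:
  shows "(Aut :: (real^'n^'n \<Rightarrow> real^'n^'n) set) = Sym"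
proof
  show "(Aut :: (real^'n^'n \<Rightarrow> real^'n^'n) set) \<subseteq> Sym"
  proof
    fix s :: "real^'n^'n \<Rightarrow> real^'n^'n" assume s: "s \<in> Aut"
    obtain T where sJ: "(extGN (RMap T) \<circ> s) (outer ones) = outer ones"
      by (rule Aut_sign_normalise[OF s])
    have "extGN (RMap T) \<circ> s \<in> Aut" by (rule Aut_comp[OF RMap_Aut(1) s])
    then obtain p where "p permutes UNIV"
      and "\<And>G. G \<in> GN \<Longrightarrow> (extGN (RMap T) \<circ> s) G = perm_conj (inv p) G"
      using Aut_fixing_ones_eq_perm_conj sJ by blast
    then show "s \<in> Sym" by (intro Aut_in_Sym[OF s]) simp_all
  qed
qed (rule Sym_subset_Aut)

end
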